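(* Let $\Phi\in\mathcal{C}^2(\mathbb{R}^d)$ have compact sublevel sets. Given $t>0$ and $K>0$ there exist constants $\alpha,\delta_X,\delta_V>0$ such that every solution $f$ of \[\partial_tf+v\cdot\nabla_xf-\nabla_x\Phi(x)\cdot\nabla_vf=\Big(\int_{\mathbb{R}^d}f(t,x,u)\,\mathrm{d}u\Big)\mathcal{M}(v)-f\] with initial datum $f_0\in\mathcal{P}(\mathbb{R}^d\times\mathbb{R}^d)$ supported in $B(0,K)\times B(0,K)$ satisfies \[f(t,x,v)\ge\alpha\,\mathbb{1}_{\{|x|<\delta_X\}}\mathbb{1}_{\{|v|<\delta_V\}}\] in the sense of measures.
   Context: $\mathcal{M}(v)=(2\pi)^{-d/2}e^{-|v|^2/2}$; solutions are measure-valued solutions given by the associated Markov semigroup; the right-hand side is $\alpha$ times Lebesgue measure on $\{|x|<\delta_X\}\times\{|v|<\delta_V\}$. *)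

theory Defs
  imports "HOL-Analysis.Analysis" "HOL-Probability.Probability"
begin

type_synonym 'n state = "(real^'n) \<times> (real^'n)"

definition C2 :: "(real^'n \<Rightarrow> real) \<Rightarrow> bool" where
  "C2 \<Phi> \<longleftrightarrow> (\<exists>G H. (\<forall>x. (\<Phi> has_derivative (\<lambda>h. G x \<bullet> h)) (at x))
      \<and> (\<forall>x. (G has_derivative blinfun_apply (H x)) (at x))
      \<and> continuous_on UNIV (H :: (real^'n) \<Rightarrow> ((real^'n) \<Rightarrow>\<^sub>L (real^'n))))"

definition grad :: "(real^'n \<Rightarrow> real) \<Rightarrow> real^'n \<Rightarrow> real^'n" where
  "grad \<Phi> x = (THE g. (\<Phi> has_derivative (\<lambda>h. g \<bullet> h)) (at x))"

definition ham_flow :: "(real^'n \<Rightarrow> real) \<Rightarrow> (real \<Rightarrow> 'n state \<Rightarrow> 'n state) \<Rightarrow> bool" where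
  "ham_flow \<Phi> F \<longleftrightarrow> (\<forall>z. F 0 z = z \<and>
      (\<forall>t. ((\<lambda>s. fst (F s z)) has_vector_derivative snd (F t z)) (at t)
         \<and> ((\<lambda>s. snd (F s z)) has_vector_derivative - grad \<Phi> (fst (F t z))) (at t)))"

definition maxwellian :: "(real^'n) measure" where
  "maxwellian = density lborel
     (\<lambda>v. ennreal ((2 * pi) powr (- real CARD('n) / 2) * exp (- (norm v)\<^sup>2 / 2)))"

text \<open>Measure-valued solution given by the Markov semigroup, expressed through the
  equivalent mild (Duhamel) formulation along the Hamiltonian flow:
  f_t = e^{-t} (F_t)_# f_0 + int_0^t e^{-(t-s)} (F_{t-s})_# (rho_s \<otimes> M) ds,
  where rho_s is the x-marginal of f_s.\<close>
definition kinetic_solution ::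
  "(real^'n \<Rightarrow> real) \<Rightarrow> 'n state measure \<Rightarrow> (real \<Rightarrow> 'n state measure) \<Rightarrow> bool" where
  "kinetic_solution \<Phi> f0 f \<longleftrightarrow>
     (\<exists>F. ham_flow \<Phi> F \<and>
       (\<forall>t\<ge>0. prob_space (f t) \<and> sets (f t) = sets borel) \<and>
       (\<forall>t\<ge>0. \<forall>A\<in>sets borel.
          set_integrable lborel {0..t}
            (\<lambda>s. exp (-(t - s)) * measure (distr (distr (f s) borel fst \<Otimes>\<^sub>M maxwellian) borel (F (t - s))) A)
        \<and> measure (f t) A = exp (-t) * measure (distr f0 borel (F t)) A
            + (\<integral>s\<in>{0..t}. exp (-(t - s)) *
                 measure (distr (distr (f s) borel fst \<Otimes>\<^sub>M maxwellian) borel (F (t - s))) A \<partial>lborel)))"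

end

theory Submission
  imports Defs
begin

(* The solution is given by Duhamel's formula: f_t is e^(-t) times the initial datum transported
   by the Hamiltonian flow F_t, plus the integral over s of e^(-(t-s)) times rho_s (x) M
   transported by F_(t-s), where rho_s is the position marginal of f_s.

   Energy conservation keeps the transported initial datum in a fixed ball B_R of positions, so
   rho_s(B_R) >= e^(-s).  For a short time tau the position reached from (y, w) is
   y + tau w + O(tau^2), so by Brouwer's theorem every point of the unit ball is reached from each
   y in B_R with a velocity in a fixed ball; the Lipschitz bound on the flow turns this into a
   Lebesgue lower bound for rho_s on the unit ball once s >= tau0.  Repeating the argument in
   phase space, where a short-time flow maps the unit ball onto a ball of radius 1/2, gives a
   Lebesgue lower bound for f_t near the origin. *)

section \<open>Lebesgue measure of Lipschitz images\<close>

lemma measure_cube: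
  fixes a :: "'a::euclidean_space"
  assumes "0 \<le> r"
  shows "measure lborel (cbox (a - r *\<^sub>R One) (a + r *\<^sub>R One)) = (2 * r) ^ DIM('a)"
proof -
  have "measure lborel (cbox (a - r *\<^sub>R One) (a + r *\<^sub>R One)) = (\<Prod>i::'a\<in>Basis. 2 * r)"
    using assms by (subst content_cbox) (auto simp: inner_diff_left inner_add_left intro!: prod.cong)
  then show ?thesis by simp
qed

lemma measure_cbox_equal_sides:
  fixes u v :: "'a::euclidean_space"
  assumes "0 \<le> h" "\<And>i. i \<in> Basis \<Longrightarrow> v \<bullet> i - u \<bullet> i = h"
  shows "measure lborel (cbox u v) = h ^ DIM('a)"
proof -
  have "\<And>i. i \<in> Basis \<Longrightarrow> u \<bullet> i \<le> v \<bullet> i"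
    using assms by (metis diff_ge_0_iff_ge)
  then have "measure lborel (cbox u v) = (\<Prod>i\<in>Basis. v \<bullet> i - u \<bullet> i)"
    by (intro content_cbox) blast
  also have "\<dots> = (\<Prod>i::'a\<in>Basis. h)"
    using assms(2) by (intro prod.cong) auto
  finally show ?thesis by simp
qed

lemma Lipschitz_image_cube:
  fixes f :: "'a::euclidean_space \<Rightarrow> 'a"
  assumes lip: "B-lipschitz_on S f" and z: "z \<in> S" "z \<in> cbox u v"
    and side: "0 \<le> h" "\<And>i. i \<in> Basis \<Longrightarrow> v \<bullet> i - u \<bullet> i = h"
  obtains Q where "f ` (S \<inter> cbox u v) \<subseteq> Q" "Q \<in> lmeasurable"
    "measure lebesgue Q = (2 * B * DIM('a)) ^ DIM('a) * measure lebesgue (cbox u v)"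
proof
  define r where "r = B * DIM('a) * h"
  have "0 \<le> r"
    using lipschitz_on_nonneg[OF lip] side(1) by (simp add: r_def)
  show "cbox (f z - r *\<^sub>R One) (f z + r *\<^sub>R One) \<in> lmeasurable"
    by simp
  show "measure lebesgue (cbox (f z - r *\<^sub>R One) (f z + r *\<^sub>R One)) =
      (2 * B * DIM('a)) ^ DIM('a) * measure lebesgue (cbox u v)"
    using measure_cube[OF \<open>0 \<le> r\<close>, of "f z"] measure_cbox_equal_sides[OF side]
    by (simp add: r_def power_mult_distrib)
  show "f ` (S \<inter> cbox u v) \<subseteq> cbox (f z - r *\<^sub>R One) (f z + r *\<^sub>R One)"
  proof clarify
    fix y assume y: "y \<in> S" "y \<in> cbox u v"
    have "norm (y - z) \<le> (\<Sum>i\<in>Basis. \<bar>(y - z) \<bullet> i\<bar>)"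
      by (rule norm_le_l1)
    also have "\<dots> \<le> (\<Sum>i::'a\<in>Basis. h)"
      using y(2) z(2) side by (intro sum_mono) (fastforce simp: mem_box inner_diff_left)
    finally have "norm (y - z) \<le> DIM('a) * h"
      by simp
    moreover have "norm (f y - f z) \<le> B * norm (y - z)"
      using lipschitz_onD[OF lip y(1) z(1)] by (simp add: dist_norm)
    ultimately have "norm (f y - f z) \<le> r"
      using lipschitz_on_nonneg[OF lip] by (smt (verit) r_def mult.assoc mult_left_mono)
    then have "\<bar>(f y - f z) \<bullet> i\<bar> \<le> r" if "i \<in> Basis" for i :: 'a
      using Basis_le_norm[OF that] by (smt (verit))
    then show "f y \<in> cbox (f z - r *\<^sub>R One) (f z + r *\<^sub>R One)"
      by (simp add: mem_box abs_le_iff algebra_simps)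
  qed
qed

lemma cubes_cover_in_open:
  fixes S :: "'a::euclidean_space set"
  assumes "bounded S" "open T" "S \<subseteq> T"
  obtains \<D> where "countable \<D>" "S \<subseteq> \<Union>\<D>" "pairwise (\<lambda>A B. interior A \<inter> interior B = {}) \<D>"
    "\<And>K. K \<in> \<D> \<Longrightarrow> K \<subseteq> T \<and> S \<inter> K \<noteq> {} \<and>
      (\<exists>u v h. K = cbox u v \<and> 0 \<le> h \<and> (\<forall>i\<in>Basis. v \<bullet> i - u \<bullet> i = h))"
proof -
  obtain a where "S \<subseteq> cbox (-a) a"
    using bounded_subset_cbox_symmetric[OF assms(1)] by metis
  define c where "c = norm a + 1"
  have cube: "S \<subseteq> cbox (- c *\<^sub>R One) (c *\<^sub>R One)"
  proof
    fix x assume "x \<in> S"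
    then have "x \<in> cbox (-a) a" using \<open>S \<subseteq> cbox (-a) a\<close> by blast
    then show "x \<in> cbox (- c *\<^sub>R One) (c *\<^sub>R One)"
      unfolding mem_box c_def using Basis_le_norm[of _ a] by (fastforce simp: abs_le_iff)
  qed
  have box: "box (- c *\<^sub>R One) (c *\<^sub>R One :: 'a) \<noteq> {}"
    by (simp add: box_ne_empty c_def) (smt (verit) norm_ge_zero)
  have gauge: "gauge (\<lambda>x. if x \<in> T then T else UNIV)"
    using \<open>open T\<close> by (simp add: gauge_def)
  obtain \<D> where "countable \<D>" "\<Union>\<D> \<subseteq> cbox (- c *\<^sub>R One) (c *\<^sub>R One)"
    and cbox: "\<And>K. K \<in> \<D> \<Longrightarrow> interior K \<noteq> {} \<and> (\<exists>c d. K = cbox c d)"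
    and nonoverlap: "pairwise (\<lambda>A B. interior A \<inter> interior B = {}) \<D>"
    and meet: "\<And>K. K \<in> \<D> \<Longrightarrow> \<exists>z \<in> S \<inter> K. K \<subseteq> (if z \<in> T then T else UNIV)"
    and side: "\<And>u v. cbox u v \<in> \<D> \<Longrightarrow>
      \<exists>n. \<forall>i \<in> Basis. v \<bullet> i - u \<bullet> i = ((c *\<^sub>R One) \<bullet> i - (- c *\<^sub>R One) \<bullet> i) / 2 ^ n"
    and "S \<subseteq> \<Union>\<D>"
    using covering_lemma[OF cube box gauge] by blast
  have "K \<subseteq> T \<and> S \<inter> K \<noteq> {} \<and> (\<exists>u v h. K = cbox u v \<and> 0 \<le> h \<and> (\<forall>i\<in>Basis. v \<bullet> i - u \<bullet> i = h))"
    if K: "K \<in> \<D>" for K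
  proof -
    obtain u v where uv: "K = cbox u v" using cbox[OF K] by blast
    obtain n where "\<forall>i\<in>Basis. v \<bullet> i - u \<bullet> i = (2 * c) / 2 ^ n"
      using side K uv by fastforce
    moreover have "0 \<le> (2 * c) / 2 ^ n" by (simp add: c_def)
    moreover obtain z where z: "z \<in> S" "z \<in> K" "K \<subseteq> (if z \<in> T then T else UNIV)"
      using meet[OF K] by blast
    moreover have "z \<in> T" using z(1) \<open>S \<subseteq> T\<close> by blast
    ultimately show ?thesis using uv by auto
  qed
  with \<open>countable \<D>\<close> \<open>S \<subseteq> \<Union>\<D>\<close> nonoverlap show thesis
    using that by blast
qed

lemma Lipschitz_image_outer_bound:
  fixes f :: "'a::euclidean_space \<Rightarrow> 'a"
  assumes lip: "B-lipschitz_on S f" and "bounded S" "open T" "S \<subseteq> T" "T \<in> lmeasurable"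
  obtains W where "W \<in> lmeasurable" "f ` S \<subseteq> W"
    "measure lebesgue W \<le> (2 * B * DIM('a)) ^ DIM('a) * measure lebesgue T"
proof -
  define C where "C = (2 * B * DIM('a)) ^ DIM('a)"
  have "0 \<le> C" using lipschitz_on_nonneg[OF lip] by (simp add: C_def)
  obtain \<D> where "countable \<D>" "S \<subseteq> \<Union>\<D>" and nonoverlap: "pairwise (\<lambda>A B. interior A \<inter> interior B = {}) \<D>"
    and cubes: "\<And>K. K \<in> \<D> \<Longrightarrow> K \<subseteq> T \<and> S \<inter> K \<noteq> {} \<and>
      (\<exists>u v h. K = cbox u v \<and> 0 \<le> h \<and> (\<forall>i\<in>Basis. v \<bullet> i - u \<bullet> i = h))"
    using cubes_cover_in_open[OF assms(2-4)] by blast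
  have "\<exists>Q. f ` (S \<inter> K) \<subseteq> Q \<and> Q \<in> lmeasurable \<and> measure lebesgue Q = C * measure lebesgue K"
    if "K \<in> \<D>" for K
    using cubes[OF that] Lipschitz_image_cube[OF lip] unfolding C_def by (metis IntE ex_in_conv)
  then obtain Q where Q: "\<And>K. K \<in> \<D> \<Longrightarrow>
      f ` (S \<inter> K) \<subseteq> Q K \<and> Q K \<in> lmeasurable \<and> measure lebesgue (Q K) = C * measure lebesgue K"
    by metis
  have Q_bound: "measure lebesgue (\<Union>K\<in>\<D>'. Q K) \<le> C * measure lebesgue T"
    if "\<D>' \<subseteq> \<D>" "finite \<D>'" for \<D>'
  proof -
    have "\<D>' division_of \<Union>\<D>'"
      using that cubes pairwise_subset[OF nonoverlap \<open>\<D>' \<subseteq> \<D>\<close>]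
      by (fastforce simp: division_of_def pairwise_def)
    then have "(\<Sum>K\<in>\<D>'. measure lebesgue K) = measure lebesgue (\<Union>\<D>')" "\<Union>\<D>' \<in> lmeasurable"
      by (auto intro: content_division lmeasurable_division)
    moreover have "\<Union>\<D>' \<subseteq> T"
      using that cubes by blast
    ultimately have "(\<Sum>K\<in>\<D>'. measure lebesgue K) \<le> measure lebesgue T"
      using assms(5) by (simp add: measure_mono_fmeasurable)
    moreover have "measure lebesgue (\<Union>K\<in>\<D>'. Q K) \<le> (\<Sum>K\<in>\<D>'. measure lebesgue (Q K))"
      using that Q by (intro measure_UNION_le) auto
    ultimately show ?thesis
      using that Q \<open>0 \<le> C\<close>
      by (simp add: sum_distrib_left[symmetric] subset_iff mult_left_mono order_trans)
  qed
  show thesis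
  proof (rule that)
    show "(\<Union>K\<in>\<D>. Q K) \<in> lmeasurable"
      using fmeasurable_UN_bound[OF \<open>countable \<D>\<close> _ Q_bound] Q by auto
    show "f ` S \<subseteq> (\<Union>K\<in>\<D>. Q K)"
      using \<open>S \<subseteq> \<Union>\<D>\<close> Q by blast
    show "measure lebesgue (\<Union>K\<in>\<D>. Q K) \<le> (2 * B * DIM('a)) ^ DIM('a) * measure lebesgue T"
      using measure_UN_bound[OF \<open>countable \<D>\<close> _ Q_bound] Q by (auto simp: C_def)
  qed
qed

lemma measure_Lipschitz_image_le:
  fixes f :: "'a::euclidean_space \<Rightarrow> 'a"
  assumes lip: "B-lipschitz_on S f" and S: "bounded S" "S \<in> sets lebesgue"
    and A: "A \<in> sets lebesgue" "A \<subseteq> f ` S"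
  shows "measure lebesgue A \<le> (2 * B * DIM('a)) ^ DIM('a) * measure lebesgue S"
proof -
  define C where "C = (2 * B * DIM('a)) ^ DIM('a)"
  have "0 \<le> C" using lipschitz_on_nonneg[OF lip] by (simp add: C_def)
  have "S \<in> lmeasurable"
    using S by (simp add: bounded_set_imp_lmeasurable)
  have approx: "measure lebesgue A \<le> C * measure lebesgue S + C * e" if e: "0 < e" for e
  proof -
    obtain T where "open T" "S \<subseteq> T" "T - S \<in> lmeasurable" "emeasure lebesgue (T - S) < ennreal e"
      using sets_lebesgue_outer_open[OF S(2) e] by metis
    then have "measure lebesgue (T - S) < e"
      by (metis emeasure_eq_measure2 ennreal_leI linorder_not_le)
    moreover have T: "T \<in> lmeasurable"
      using \<open>S \<in> lmeasurable\<close> \<open>S \<subseteq> T\<close> \<open>T - S \<in> lmeasurable\<close> fmeasurable_Diff_D by blast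
    ultimately have "measure lebesgue T \<le> measure lebesgue S + e"
      using measurable_measure_Diff[OF T _ \<open>S \<subseteq> T\<close>] \<open>S \<in> lmeasurable\<close> by auto
    moreover obtain W where "W \<in> lmeasurable" "f ` S \<subseteq> W" "measure lebesgue W \<le> C * measure lebesgue T"
      using Lipschitz_image_outer_bound[OF lip S(1) \<open>open T\<close> \<open>S \<subseteq> T\<close> T] unfolding C_def by blast
    moreover have "measure lebesgue A \<le> measure lebesgue W"
      using A \<open>W \<in> lmeasurable\<close> \<open>f ` S \<subseteq> W\<close> by (meson measure_mono_fmeasurable order_trans)
    ultimately show ?thesis
      using \<open>0 \<le> C\<close> by (smt (verit) distrib_left mult_left_mono)
  qed
  show ?thesis unfolding C_def[symmetric]
  proof (rule field_le_epsilon)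
    fix e :: real assume "0 < e"
    then have "C * (e / (C + 1)) \<le> e"
      using \<open>0 \<le> C\<close> by (simp add: field_simps)
    then show "measure lebesgue A \<le> C * measure lebesgue S + e"
      using approx[of "e / (C + 1)"] \<open>0 \<le> C\<close> \<open>0 < e\<close> by simp
  qed
qed

lemma measure_Lipschitz_preimage_ge:
  fixes g :: "'a::euclidean_space \<Rightarrow> 'a"
  assumes lip: "\<Lambda>-lipschitz_on D g" and D: "bounded D" "D \<in> sets borel"
    and g: "g \<in> borel_measurable borel" and B: "B \<in> sets borel" "B \<subseteq> g ` D"
  shows "measure lborel B \<le> (2 * \<Lambda> * DIM('a)) ^ DIM('a) * measure lborel (g -` B \<inter> D)"
proof -
  have "g -` B \<inter> D \<in> sets borel"
    using measurable_sets[OF g B(1)] D(2) by auto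
  moreover have "measure lebesgue B \<le> (2 * \<Lambda> * DIM('a)) ^ DIM('a) * measure lebesgue (g -` B \<inter> D)"
    using calculation B D
    by (intro measure_Lipschitz_image_le[OF lipschitz_on_subset[OF lip]]) (auto intro: bounded_subset)
  ultimately show ?thesis
    using B(1) by simp
qed

lemma emeasure_lborel_bounded:
  fixes S :: "'a::euclidean_space set"
  assumes "bounded S"
  shows "emeasure lborel S = ennreal (measure lborel S)"
  using emeasure_bounded_finite[OF assms] by (simp add: emeasure_eq_ennreal_measure)

lemma cball_borel: "cball (x :: 'a::euclidean_space) r \<in> sets borel"
  by (simp add: borel_closed)

lemma measure_lborel_mono_bounded:
  fixes A B :: "'a::euclidean_space set"
  assumes "A \<subseteq> B" "A \<in> sets borel" "B \<in> sets borel" "bounded B"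
  shows "measure lborel A \<le> measure lborel B"
  using assms emeasure_bounded_finite[OF assms(4)]
  by (intro measure_mono_fmeasurable) (auto simp: fmeasurable_def)

section \<open>The Maxwellian and product measures\<close>

lemma maxwellian_density_eq_prod:
  fixes v :: "real^'n"
  shows "(2 * pi) powr (- real CARD('n) / 2) * exp (- (norm v)\<^sup>2 / 2) =
    (\<Prod>b\<in>Basis. std_normal_density (v \<bullet> b))"
proof -
  have "(2 * pi) powr (- real CARD('n) / 2) = ((2 * pi) powr (- 1 / 2)) ^ CARD('n)"
    by (simp add: powr_realpow[symmetric] powr_powr)
  also have "\<dots> = (\<Prod>b::real^'n\<in>Basis. 1 / sqrt (2 * pi))"
    by (simp add: sqrt_def root_powr_inverse powr_minus_divide)
  moreover have "(norm v)\<^sup>2 = (\<Sum>b\<in>Basis. (v \<bullet> b)\<^sup>2)"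
    by (subst power2_norm_eq_inner, subst euclidean_inner) (simp add: power2_eq_square)
  then have "exp (- (norm v)\<^sup>2 / 2) = (\<Prod>b\<in>Basis. exp (- (v \<bullet> b)\<^sup>2 / 2))"
    by (simp add: exp_sum[symmetric] sum_divide_distrib sum_negf)
  ultimately show ?thesis
    by (simp only: std_normal_density_def prod.distrib)
qed

lemma prob_space_maxwellian: "prob_space (maxwellian :: (real^'n) measure)"
proof
  have "emeasure (maxwellian :: (real^'n) measure) (space maxwellian) =
      (\<integral>\<^sup>+v. (\<Prod>b\<in>Basis. ennreal (std_normal_density (v \<bullet> b))) \<partial>(lborel :: (real^'n) measure))"
    unfolding maxwellian_def maxwellian_density_eq_prod by (simp add: emeasure_density prod_ennreal)
  also have "\<dots> = (\<Prod>b\<in>(Basis :: (real^'n) set). \<integral>\<^sup>+x. ennreal (std_normal_density x) \<partial>lborel)"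
    by (rule nn_integral_lborel_prod) auto
  also have "\<dots> = 1"
    by (simp add: nn_integral_eq_integral)
  finally show "emeasure (maxwellian :: (real^'n) measure) (space maxwellian) = 1" .
qed

lemma sets_maxwellian: "sets maxwellian = sets borel"
  by (simp add: maxwellian_def)

lemma maxwellian_ge_lebesgue:
  assumes B: "B \<in> sets borel"
  shows "(2 * pi) powr (- real CARD('n) / 2) * exp (- r\<^sup>2 / 2) * measure lborel (B \<inter> cball 0 r)
    \<le> measure (maxwellian :: (real^'n) measure) B"
proof -
  interpret prob_space "maxwellian :: (real^'n) measure"
    by (rule prob_space_maxwellian)
  define m where "m = (2 * pi) powr (- real CARD('n) / 2) * exp (- r\<^sup>2 / 2)"
  have "ennreal (m * measure lborel (B \<inter> cball 0 r)) = (\<integral>\<^sup>+v. ennreal m * indicator (B \<inter> cball 0 r) v \<partial>lborel)"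
    using B by (simp add: nn_integral_cmult_indicator emeasure_lborel_bounded bounded_Int
        ennreal_mult m_def)
  also have "\<dots> \<le> (\<integral>\<^sup>+v. ennreal ((2 * pi) powr (- real CARD('n) / 2) * exp (- (norm v)\<^sup>2 / 2)) * indicator B v \<partial>lborel)"
  proof (intro nn_integral_mono)
    fix v :: "real^'n"
    show "ennreal m * indicator (B \<inter> cball 0 r) v \<le>
        ennreal ((2 * pi) powr (- real CARD('n) / 2) * exp (- (norm v)\<^sup>2 / 2)) * indicator B v"
    proof (cases "v \<in> B \<inter> cball 0 r")
      case True
      then have "(norm v)\<^sup>2 \<le> r\<^sup>2"
        by (simp add: power_mono)
      then show ?thesis
        using True by (simp add: m_def ennreal_leI)
    qed (simp split: split_indicator)
  qed
  also have "\<dots> = emeasure maxwellian B"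
    unfolding maxwellian_def using B by (simp add: emeasure_density)
  finally show ?thesis
    by (simp add: emeasure_eq_measure m_def)
qed

lemma maxwellian_preimage_ge:
  fixes g :: "real^'n \<Rightarrow> real^'n"
  assumes lip: "\<Lambda>-lipschitz_on (cball 0 W) g" and g: "g \<in> borel_measurable borel"
    and S: "S \<in> sets borel" "S \<subseteq> g ` cball 0 W"
  shows "(2 * pi) powr (- real CARD('n) / 2) * exp (- W\<^sup>2 / 2) / (2 * \<Lambda> * CARD('n)) ^ CARD('n)
      * measure lborel S \<le> measure maxwellian (g -` S)"
proof -
  define C where "C = (2 * \<Lambda> * CARD('n)) ^ CARD('n)"
  define m where "m = (2 * pi) powr (- real CARD('n) / 2) * exp (- W\<^sup>2 / 2)"
  have "0 \<le> C" "0 \<le> m"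
    using lipschitz_on_nonneg[OF lip] by (simp_all add: C_def m_def)
  have "measure lborel S \<le> C * measure lborel (g -` S \<inter> cball 0 W)"
    using measure_Lipschitz_preimage_ge[OF lip bounded_cball _ g S] by (simp add: C_def)
  then have "m / C * measure lborel S \<le> m / C * (C * measure lborel (g -` S \<inter> cball 0 W))"
    using \<open>0 \<le> C\<close> \<open>0 \<le> m\<close> by (intro mult_left_mono) simp_all
  also have "\<dots> \<le> m * measure lborel (g -` S \<inter> cball 0 W)"
    using \<open>0 \<le> m\<close> by (cases "C = 0") simp_all
  also have "\<dots> \<le> measure maxwellian (g -` S)"
    using maxwellian_ge_lebesgue[of "g -` S" W] measurable_sets_borel[OF g S(1)] by (simp add: m_def)
  finally show ?thesis
    by (simp add: C_def m_def)
qed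

lemma measure_pair_ge_fibrewise:
  assumes M: "prob_space M" and N: "prob_space N"
    and X: "X \<in> sets (M \<Otimes>\<^sub>M N)" and Y: "Y \<in> sets M" and "0 \<le> c"
    and fibre: "\<And>y. y \<in> Y \<Longrightarrow> c \<le> measure N (Pair y -` X)"
  shows "c * measure M Y \<le> measure (M \<Otimes>\<^sub>M N) X"
proof -
  interpret M: prob_space M by fact
  interpret N: prob_space N by fact
  interpret MN: pair_prob_space M N ..
  have "ennreal (c * measure M Y) = (\<integral>\<^sup>+y. ennreal c * indicator Y y \<partial>M)"
    using Y \<open>0 \<le> c\<close> by (simp add: nn_integral_cmult_indicator M.emeasure_eq_measure ennreal_mult)
  also have "\<dots> \<le> (\<integral>\<^sup>+y. emeasure N (Pair y -` X) \<partial>M)"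
    using fibre by (intro nn_integral_mono) (auto simp: N.emeasure_eq_measure split: split_indicator)
  also have "\<dots> = emeasure (M \<Otimes>\<^sub>M N) X"
    by (rule N.emeasure_pair_measure_alt[OF X, symmetric])
  finally show ?thesis
    by (simp add: MN.emeasure_eq_measure)
qed

lemma density_indicator_le:
  fixes S :: "'a::euclidean_space set"
  assumes M: "finite_measure M" "sets M = sets borel" and S: "S \<in> sets borel" "bounded S"
    and "0 \<le> c" and le: "\<And>B. B \<in> sets borel \<Longrightarrow> c * measure lborel (B \<inter> S) \<le> measure M B"
  shows "density lborel (\<lambda>x. ennreal c * indicator S x) \<le> M"
proof -
  have "emeasure (density lborel (\<lambda>x. ennreal c * indicator S x)) B \<le> emeasure M B" for B
  proof (cases "B \<in> sets borel")
    case True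
    have "emeasure (density lborel (\<lambda>x. ennreal c * indicator S x)) B =
        (\<integral>\<^sup>+x. ennreal c * indicator (B \<inter> S) x \<partial>lborel)"
      using True S by (auto simp: emeasure_density intro!: nn_integral_cong split: split_indicator)
    also have "\<dots> = ennreal (c * measure lborel (B \<inter> S))"
      using True S \<open>0 \<le> c\<close>
      by (simp add: nn_integral_cmult_indicator emeasure_lborel_bounded bounded_Int ennreal_mult)
    also have "\<dots> \<le> emeasure M B"
      using le[OF True] finite_measure.emeasure_eq_measure[OF M(1)] by simp
    finally show ?thesis .
  qed (simp add: emeasure_notin_sets M)
  moreover have "space M = UNIV"
    using sets_eq_imp_space_eq[OF M(2)] by simp
  ultimately show ?thesis
    using M by (simp add: le_measure_iff le_fun_def)
qed

lemma emeasure_pair_measure_mono: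
  assumes "sets M' = sets M" "M' \<le> M" "sets N' = sets N" "N' \<le> N"
    and "sigma_finite_measure N" "sigma_finite_measure N'"
    and X: "X \<in> sets (M \<Otimes>\<^sub>M N)"
  shows "emeasure (M' \<Otimes>\<^sub>M N') X \<le> emeasure (M \<Otimes>\<^sub>M N) X"
proof -
  interpret N: sigma_finite_measure N by fact
  interpret N': sigma_finite_measure N' by fact
  have X': "X \<in> sets (M' \<Otimes>\<^sub>M N')"
    using X assms(1,3) by (metis sets_pair_measure_cong)
  have "emeasure (M' \<Otimes>\<^sub>M N') X = (\<integral>\<^sup>+x. \<integral>\<^sup>+y. indicator X (x, y) \<partial>N' \<partial>M')"
    by (rule N'.emeasure_pair_measure[OF X'])
  also have "\<dots> \<le> (\<integral>\<^sup>+x. \<integral>\<^sup>+y. indicator X (x, y) \<partial>N \<partial>M')"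
    by (intro nn_integral_mono nn_integral_mono_measure assms)
  also have "\<dots> \<le> (\<integral>\<^sup>+x. \<integral>\<^sup>+y. indicator X (x, y) \<partial>N \<partial>M)"
    by (intro nn_integral_mono_measure assms)
  also have "\<dots> = emeasure (M \<Otimes>\<^sub>M N) X"
    by (rule N.emeasure_pair_measure[OF X, symmetric])
  finally show ?thesis .
qed

lemma emeasure_pair_density_indicator:
  fixes S1 :: "'a::euclidean_space set" and S2 :: "'b::euclidean_space set"
  assumes "0 \<le> c1" "0 \<le> c2" "S1 \<in> sets borel" "S2 \<in> sets borel" "X \<in> sets borel"
  shows "emeasure (density lborel (\<lambda>x. ennreal c1 * indicator S1 x) \<Otimes>\<^sub>M
      density lborel (\<lambda>y. ennreal c2 * indicator S2 y)) X = ennreal (c1 * c2) * emeasure lborel (X \<inter> S1 \<times> S2)"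
proof -
  have [measurable]: "S1 \<in> sets borel" "S2 \<in> sets borel" "X \<in> sets borel"
    using assms by auto
  have sf: "sigma_finite_measure (density lborel (\<lambda>y. ennreal c2 * indicator S2 y))"
    by (subst sigma_finite_measure.sigma_finite_iff_density_finite[OF sigma_finite_lborel])
       (auto simp: indicator_def)
  have "density lborel (\<lambda>x. ennreal c1 * indicator S1 x) \<Otimes>\<^sub>M density lborel (\<lambda>y. ennreal c2 * indicator S2 y)
      = density (lborel \<Otimes>\<^sub>M lborel) (\<lambda>(x, y). ennreal c1 * indicator S1 x * (ennreal c2 * indicator S2 y))"
    by (rule pair_measure_density) (auto intro: sf sigma_finite_lborel)
  also have "(\<lambda>(x, y). ennreal c1 * indicator S1 x * (ennreal c2 * indicator S2 y)) =
      (\<lambda>z. ennreal (c1 * c2) * indicator (S1 \<times> S2) z)"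
    using assms by (auto simp: fun_eq_iff ennreal_mult indicator_def)
  finally have pair_eq: "density lborel (\<lambda>x. ennreal c1 * indicator S1 x) \<Otimes>\<^sub>M
      density lborel (\<lambda>y. ennreal c2 * indicator S2 y) =
      density lborel (\<lambda>z. ennreal (c1 * c2) * indicator (S1 \<times> S2) z)"
    by (simp only: lborel_prod)
  have prod: "S1 \<times> S2 \<in> sets (borel :: ('a \<times> 'b) measure)"
    using assms by (simp add: borel_prod[symmetric])
  then have meas: "X \<inter> S1 \<times> S2 \<in> sets lborel"
    using assms(5) by (intro sets.Int) simp_all
  have "emeasure (density lborel (\<lambda>x. ennreal c1 * indicator S1 x) \<Otimes>\<^sub>M
      density lborel (\<lambda>y. ennreal c2 * indicator S2 y)) X =
      (\<integral>\<^sup>+z. ennreal (c1 * c2) * indicator (X \<inter> S1 \<times> S2) z \<partial>lborel)"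
    unfolding pair_eq
  proof (subst emeasure_density)
    show "(\<lambda>z. ennreal (c1 * c2) * indicator (S1 \<times> S2) z) \<in> borel_measurable lborel"
      using prod by (intro borel_measurable_times_ennreal borel_measurable_const borel_measurable_indicator) simp
    show "X \<in> sets lborel"
      using assms(5) by simp
    show "(\<integral>\<^sup>+z. ennreal (c1 * c2) * indicator (S1 \<times> S2) z * indicator X z \<partial>lborel) =
        (\<integral>\<^sup>+z. ennreal (c1 * c2) * indicator (X \<inter> S1 \<times> S2) z \<partial>lborel)"
      by (intro nn_integral_cong) (simp split: split_indicator)
  qed
  also have "\<dots> = ennreal (c1 * c2) * emeasure lborel (X \<inter> S1 \<times> S2)"
    by (rule nn_integral_cmult_indicator[OF meas])
  finally show ?thesis .
qed

lemma measure_pair_ge_lebesgue: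
  fixes S1 :: "'a::euclidean_space set" and S2 :: "'b::euclidean_space set"
  assumes M: "prob_space M" "sets M = sets borel" and N: "prob_space N" "sets N = sets borel"
    and S: "S1 \<in> sets borel" "S2 \<in> sets borel" "bounded S1" "bounded S2"
    and c: "0 \<le> c1" "0 \<le> c2"
    and M_ge: "\<And>B. B \<in> sets borel \<Longrightarrow> c1 * measure lborel (B \<inter> S1) \<le> measure M B"
    and N_ge: "\<And>B. B \<in> sets borel \<Longrightarrow> c2 * measure lborel (B \<inter> S2) \<le> measure N B"
    and X: "X \<in> sets borel"
  shows "c1 * c2 * measure lborel (X \<inter> S1 \<times> S2) \<le> measure (M \<Otimes>\<^sub>M N) X"
proof -
  interpret M: prob_space M by fact
  interpret N: prob_space N by fact
  interpret MN: pair_prob_space M N ..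
  have [measurable]: "S1 \<in> sets borel" "S2 \<in> sets borel"
    using S by auto
  have D1: "density lborel (\<lambda>x. ennreal c1 * indicator S1 x) \<le> M"
    by (rule density_indicator_le[OF M.finite_measure_axioms M(2) S(1,3) c(1) M_ge])
  have D2: "density lborel (\<lambda>y. ennreal c2 * indicator S2 y) \<le> N"
    by (rule density_indicator_le[OF N.finite_measure_axioms N(2) S(2,4) c(2) N_ge])
  have sf: "sigma_finite_measure (density lborel (\<lambda>y. ennreal c2 * indicator S2 y))"
    by (subst sigma_finite_measure.sigma_finite_iff_density_finite[OF sigma_finite_lborel])
       (auto simp: indicator_def)
  have "sets (M \<Otimes>\<^sub>M N) = sets (borel \<Otimes>\<^sub>M borel)"
    by (rule sets_pair_measure_cong[OF M(2) N(2)])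
  then have X': "X \<in> sets (M \<Otimes>\<^sub>M N)"
    using X by (simp only: borel_prod)
  have "ennreal (c1 * c2) * emeasure lborel (X \<inter> S1 \<times> S2) =
      emeasure (density lborel (\<lambda>x. ennreal c1 * indicator S1 x) \<Otimes>\<^sub>M
        density lborel (\<lambda>y. ennreal c2 * indicator S2 y)) X"
    by (rule emeasure_pair_density_indicator[OF c S(1,2) X, symmetric])
  also have "\<dots> \<le> emeasure (M \<Otimes>\<^sub>M N) X"
    by (rule emeasure_pair_measure_mono[OF _ D1 _ D2 N.sigma_finite_measure_axioms sf X'])
       (simp_all add: M(2) N(2))
  also have "\<dots> = ennreal (measure (M \<Otimes>\<^sub>M N) X)"
    by (rule MN.emeasure_eq_measure)
  finally have "ennreal (c1 * c2 * measure lborel (X \<inter> S1 \<times> S2)) \<le> ennreal (measure (M \<Otimes>\<^sub>M N) X)"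
    using S(3,4) c by (simp add: emeasure_lborel_bounded bounded_Int bounded_Times ennreal_mult)
  then show ?thesis
    by (simp add: ennreal_le_iff)
qed

lemma set_integral_ge_interval:
  fixes g :: "real \<Rightarrow> real"
  assumes int: "set_integrable lborel {0..t} g" and nonneg: "\<And>s. s \<in> {0..t} \<Longrightarrow> 0 \<le> g s"
    and lower: "\<And>s. s \<in> {a..b} \<Longrightarrow> c \<le> g s" and ab: "0 \<le> a" "a \<le> b" "b \<le> t" and "0 \<le> c"
  shows "c * (b - a) \<le> (\<integral>s\<in>{0..t}. g s \<partial>lborel)"
proof -
  have nonneg_AE: "AE s in lborel. 0 \<le> indicator {0..t} s *\<^sub>R g s"
    using nonneg by (auto simp: indicator_def)
  have "ennreal (c * (b - a)) = (\<integral>\<^sup>+s. ennreal c * indicator {a..b} s \<partial>lborel)"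
    using ab \<open>0 \<le> c\<close> by (simp add: nn_integral_cmult_indicator ennreal_mult)
  also have "\<dots> \<le> (\<integral>\<^sup>+s. ennreal (indicator {0..t} s *\<^sub>R g s) \<partial>lborel)"
    using lower ab by (intro nn_integral_mono) (auto simp: indicator_def intro: ennreal_leI)
  also have "\<dots> = ennreal (\<integral>s. indicator {0..t} s *\<^sub>R g s \<partial>lborel)"
    using int nonneg_AE by (intro nn_integral_eq_integral) (simp_all add: set_integrable_def)
  finally show ?thesis
    using integral_nonneg_AE[OF nonneg_AE] by (simp add: set_lebesgue_integral_def ennreal_le_iff)
qed

lemma grad_eqI:
  assumes "(\<Phi> has_derivative (\<lambda>h. g \<bullet> h)) (at x)"
  shows "grad \<Phi> x = g"
  unfolding grad_def
proof (rule the_equality)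
  fix g' assume "(\<Phi> has_derivative (\<lambda>h. g' \<bullet> h)) (at x)"
  then have "(\<lambda>h. g' \<bullet> h) = (\<lambda>h. g \<bullet> h)"
    using has_derivative_unique assms by blast
  then have "(g' - g) \<bullet> (g' - g) = 0"
    by (metis inner_diff_left inner_diff_right diff_self)
  then show "g' = g" by simp
qed (fact assms)

lemma has_real_derivative_inner_self:
  fixes a :: "real \<Rightarrow> 'a::real_inner"
  assumes "(a has_vector_derivative a') (at t)"
  shows "((\<lambda>s. a s \<bullet> a s) has_real_derivative 2 * (a t \<bullet> a')) (at t)"
proof -
  have d: "(a has_derivative (\<lambda>h. h *\<^sub>R a')) (at t)"
    using assms by (simp add: has_vector_derivative_def)
  have "((\<lambda>s. a s \<bullet> a s) has_derivative (\<lambda>h. a t \<bullet> (h *\<^sub>R a') + (h *\<^sub>R a') \<bullet> a t)) (at t)"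
    by (rule has_derivative_inner[OF d d])
  then show ?thesis
    unfolding has_field_derivative_def
    by (rule has_derivative_eq_rhs) (auto simp: fun_eq_iff inner_commute algebra_simps)
qed

lemma norm_increment_le:
  fixes \<phi> :: "real \<Rightarrow> 'a::real_normed_vector"
  assumes "0 \<le> s" "\<And>u. u \<in> {0..s} \<Longrightarrow> (\<phi> has_vector_derivative \<phi>' u) (at u)"
    and "\<And>u. u \<in> {0..s} \<Longrightarrow> norm (\<phi>' u) \<le> M"
  shows "norm (\<phi> s - \<phi> 0) \<le> M * s"
proof -
  have "norm (\<phi> s - \<phi> 0) \<le> M * norm (s - 0)"
  proof (rule differentiable_bound[where S="{0..s}" and f' = "\<lambda>u h. h *\<^sub>R \<phi>' u"])
    fix x assume x: "x \<in> {0..s}"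
    show "(\<phi> has_derivative (\<lambda>h. h *\<^sub>R \<phi>' x)) (at x within {0..s})"
      using assms(2)[OF x] by (simp add: has_vector_derivative_def has_derivative_at_withinI)
    have "onorm (\<lambda>h. h *\<^sub>R \<phi>' x) = norm (\<phi>' x)"
      using onorm_scaleR_left[of "\<lambda>h::real. h" "\<phi>' x"] by (simp add: onorm_id)
    then show "onorm (\<lambda>h. h *\<^sub>R \<phi>' x) \<le> M" using assms(3)[OF x] by simp
  qed (use assms in auto)
  then show ?thesis using assms by simp
qed

lemma gronwall_has_real_derivative:
  fixes q :: "real \<Rightarrow> real"
  assumes "0 \<le> \<tau>" and q: "\<And>u. u \<in> {0..\<tau>} \<Longrightarrow> (q has_real_derivative q' u) (at u)"
    and q': "\<And>u. u \<in> {0..\<tau>} \<Longrightarrow> q' u \<le> c * q u"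
  shows "q \<tau> \<le> exp (c * \<tau>) * q 0"
proof -
  define w where "w u = exp (- (c * u)) * q u" for u
  have "w \<tau> \<le> w 0"
  proof (rule DERIV_nonpos_imp_nonincreasing[OF \<open>0 \<le> \<tau>\<close>])
    fix u assume "0 \<le> u" "u \<le> \<tau>"
    then have u: "u \<in> {0..\<tau>}" by simp
    have "(w has_real_derivative exp (- (c * u)) * (q' u - c * q u)) (at u)"
      unfolding w_def by (rule derivative_eq_intros q[OF u] refl | simp add: algebra_simps)+
    moreover have "exp (- (c * u)) * (q' u - c * q u) \<le> 0"
      using q'[OF u] by (simp add: mult_nonneg_nonpos)
    ultimately show "\<exists>y. (w has_real_derivative y) (at u) \<and> y \<le> 0" by blast
  qed
  then have "exp (c * \<tau>) * (exp (- (c * \<tau>)) * q \<tau>) \<le> exp (c * \<tau>) * q 0"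
    by (simp add: w_def)
  then show ?thesis
    by (simp add: mult.assoc[symmetric] exp_add[symmetric])
qed

lemma norm_fst_snd_le:
  fixes z :: "'a::real_normed_vector \<times> 'b::real_normed_vector"
  assumes "norm z \<le> r"
  shows "norm (fst z) \<le> r" "norm (snd z) \<le> r"
  using assms norm_fst_le[of "fst z" "snd z"] norm_snd_le[of "snd z" "fst z"] by simp_all

lemma small_time:
  fixes a b :: real
  assumes "0 < T" "0 \<le> a" "0 \<le> b"
  obtains \<tau> where "0 < \<tau>" "\<tau> \<le> T" "\<tau> \<le> 1" "\<tau> * a \<le> 1" "\<tau> * b \<le> 1"
proof
  define \<tau> where "\<tau> = min (min T 1) (1 / (a + b + 1))"
  have le: "\<tau> \<le> 1 / (a + b + 1)" by (simp add: \<tau>_def)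
  show "0 < \<tau>" "\<tau> \<le> T" "\<tau> \<le> 1"
    using assms by (simp_all add: \<tau>_def)
  then have "\<tau> * a \<le> a / (a + b + 1)" "\<tau> * b \<le> b / (a + b + 1)"
    using mult_right_mono[OF le, of a] mult_right_mono[OF le, of b] assms by simp_all
  moreover have "a / (a + b + 1) \<le> 1" "b / (a + b + 1) \<le> 1"
    using assms by simp_all
  ultimately show "\<tau> * a \<le> 1" "\<tau> * b \<le> 1"
    by linarith+
qed

lemma lipschitz_on_of_continuous_derivative:
  fixes G :: "'a::euclidean_space \<Rightarrow> 'b::real_normed_vector"
  assumes G: "\<And>x. (G has_derivative blinfun_apply (H x)) (at x)" and H: "continuous_on UNIV H"
    and S: "compact S" "convex S"
  shows "\<exists>L. L-lipschitz_on S G"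
proof -
  obtain B0 where "\<forall>x\<in>S. norm (H x) \<le> B0"
    using compact_imp_bounded[OF compact_continuous_image[OF continuous_on_subset[OF H] S(1)]]
    by (auto simp: bounded_iff)
  then have B: "0 \<le> max B0 0" "\<forall>x\<in>S. norm (H x) \<le> max B0 0"
    by (auto intro: le_max_iff_disj[THEN iffD2])
  define B where "B = max B0 0"
  have "norm (G x - G y) \<le> B * norm (x - y)" if "x \<in> S" "y \<in> S" for x y
    unfolding B_def using B that G S(2)
    by (intro differentiable_bound[where f' = "\<lambda>x. blinfun_apply (H x)"])
       (auto simp: has_derivative_at_withinI norm_blinfun.rep_eq[symmetric])
  then have "B-lipschitz_on S G"
    using B(1) by (intro lipschitz_onI) (auto simp: dist_norm B_def)
  then show ?thesis by blast
qed

lemma cball_subset_image_near_dilation: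
  fixes g :: "'a::euclidean_space \<Rightarrow> 'a"
  assumes g: "continuous_on (cball 0 W) g" and "0 < \<tau>" "0 < W"
    and near: "\<And>w. norm w \<le> W \<Longrightarrow> norm (g w - \<tau> *\<^sub>R w) \<le> \<delta>" and "r + \<delta> \<le> \<tau> * W"
  shows "cball 0 r \<subseteq> g ` cball 0 W"
proof
  fix x :: 'a assume x: "x \<in> cball 0 r"
  define h where "h w = (1 / \<tau>) *\<^sub>R (x - (g w - \<tau> *\<^sub>R w))" for w
  have "continuous_on (cball 0 W) h"
    unfolding h_def by (intro continuous_intros g)
  moreover have "h \<in> cball 0 W \<rightarrow> cball 0 W"
  proof
    fix w :: 'a assume "w \<in> cball 0 W"
    then have "norm (x - (g w - \<tau> *\<^sub>R w)) \<le> r + \<delta>"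
      using x near[of w] norm_triangle_ineq4[of x "g w - \<tau> *\<^sub>R w"] by simp
    also have "\<dots> \<le> \<tau> * W" by fact
    finally have "(1 / \<tau>) * norm (x - (g w - \<tau> *\<^sub>R w)) \<le> (1 / \<tau>) * (\<tau> * W)"
      using \<open>0 < \<tau>\<close> by (intro mult_left_mono) auto
    then show "h w \<in> cball 0 W"
      unfolding h_def using \<open>0 < \<tau>\<close> by simp
  qed
  ultimately obtain w where "w \<in> cball 0 W" "h w = w"
    using brouwer_ball[OF \<open>0 < W\<close>] by blast
  moreover from \<open>h w = w\<close> have "g w = x"
    using \<open>0 < \<tau>\<close> by (simp add: h_def field_simps scaleR_diff_right)
  ultimately show "x \<in> g ` cball 0 W" by blast
qed

section \<open>The Hamiltonian flow\<close>

(* G is the gradient of the potential; of the C2 hypothesis only the local Lipschitz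
   continuity of G is used. *)
locale potential =
  fixes \<Phi> :: "real^'n \<Rightarrow> real" and G :: "real^'n \<Rightarrow> real^'n"
  assumes has_derivative_potential: "\<And>x. (\<Phi> has_derivative (\<lambda>h. G x \<bullet> h)) (at x)"
    and lipschitz_gradient: "\<And>r. \<exists>L. L-lipschitz_on (cball 0 r) G"
    and compact_sublevels: "\<And>c. compact {x. \<Phi> x \<le> c}"
begin

lemma grad_eq: "grad \<Phi> x = G x"
  by (rule grad_eqI[OF has_derivative_potential])

lemma continuous_on_potential: "continuous_on UNIV \<Phi>"
  using has_derivative_potential has_derivative_continuous
  by (blast intro: continuous_at_imp_continuous_on)

lemma potential_bounded_below:
  obtains m where "\<And>x. m \<le> \<Phi> x"
proof -
  let ?S = "{x. \<Phi> x \<le> \<Phi> 0}"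
  obtain x0 where "x0 \<in> ?S" "\<And>y. y \<in> ?S \<Longrightarrow> \<Phi> x0 \<le> \<Phi> y"
    using continuous_attains_inf[OF compact_sublevels _ continuous_on_subset[OF continuous_on_potential]]
    by (metis empty_iff mem_Collect_eq order_refl subset_UNIV)
  then have "\<Phi> x0 \<le> \<Phi> x" for x
    by (cases "\<Phi> x \<le> \<Phi> 0") force+
  then show ?thesis using that by blast
qed

lemma potential_bounded_on_cball:
  obtains M where "\<And>x. norm x \<le> r \<Longrightarrow> \<Phi> x \<le> M"
proof -
  have "compact (\<Phi> ` cball 0 r)"
    by (rule compact_continuous_image[OF continuous_on_subset[OF continuous_on_potential]]) auto
  then obtain M where "\<forall>y\<in>\<Phi> ` cball 0 r. \<bar>y\<bar> \<le> M"
    using compact_imp_bounded bounded_real by metis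
  then have "\<And>x. norm x \<le> r \<Longrightarrow> \<Phi> x \<le> M"
    by (auto dest: abs_le_D1)
  then show ?thesis by (rule that)
qed

lemma lipschitz_on_cball_gradient:
  obtains L where "0 \<le> L" "\<And>x y. norm x \<le> r \<Longrightarrow> norm y \<le> r \<Longrightarrow> norm (G x - G y) \<le> L * norm (x - y)"
proof -
  obtain L where L: "L-lipschitz_on (cball 0 r) G"
    using lipschitz_gradient by blast
  show ?thesis
  proof (rule that)
    show "0 \<le> L" using lipschitz_on_nonneg[OF L] .
    fix x y :: "real^'n" assume "norm x \<le> r" "norm y \<le> r"
    then show "norm (G x - G y) \<le> L * norm (x - y)"
      using lipschitz_on_normD[OF L] by simp
  qed
qed

lemma gradient_bounded_on_cball:
  obtains B where "0 \<le> B" "\<And>x. norm x \<le> r \<Longrightarrow> norm (G x) \<le> B"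
proof (cases "0 \<le> r")
  case True
  obtain L where L: "0 \<le> L" "\<And>x y. norm x \<le> r \<Longrightarrow> norm y \<le> r \<Longrightarrow> norm (G x - G y) \<le> L * norm (x - y)"
    using lipschitz_on_cball_gradient[where r=r] by blast
  have "norm (G x) \<le> norm (G 0) + L * r" if "norm x \<le> r" for x
    using L(2)[OF that, of 0] True norm_triangle_sub[of "G x" "G 0"] mult_left_mono[OF that L(1)]
    by simp
  then show ?thesis
    using that[of "norm (G 0) + L * r"] L(1) True by simp
next
  case False
  then show ?thesis using that[of 0] by (smt (verit) norm_ge_zero)
qed

lemma sublevel_bounded:
  obtains R where "0 \<le> R" "\<And>x. \<Phi> x \<le> c \<Longrightarrow> norm x \<le> R"
proof -
  obtain B where "\<forall>x\<in>{x. \<Phi> x \<le> c}. norm x \<le> B"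
    using compact_sublevels compact_imp_bounded bounded_iff by metis
  then show ?thesis
    using that[of "max B 0"] by (auto intro: le_max_iff_disj[THEN iffD2])
qed

end

locale hamiltonian_flow = potential +
  fixes F :: "real \<Rightarrow> ('n::finite) state \<Rightarrow> 'n state"
  assumes ham_flow: "ham_flow \<Phi> F"
begin

lemma flow_zero: "F 0 z = z"
  using ham_flow unfolding ham_flow_def by blast

lemma has_vector_derivative_position:
  "((\<lambda>s. fst (F s z)) has_vector_derivative snd (F t z)) (at t)"
  using ham_flow unfolding ham_flow_def by blast

lemma has_vector_derivative_velocity:
  "((\<lambda>s. snd (F s z)) has_vector_derivative - G (fst (F t z))) (at t)"
  using ham_flow unfolding ham_flow_def grad_eq by blast

lemma energy_conservation:
  "norm (snd (F s z))^2 / 2 + \<Phi> (fst (F s z)) = norm (snd z)^2 / 2 + \<Phi> (fst z)"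
proof -
  define e where "e u = (snd (F u z) \<bullet> snd (F u z)) / 2 + \<Phi> (fst (F u z))" for u
  have "(e has_derivative (\<lambda>h. 0)) (at u within UNIV)" for u
  proof -
    have kinetic: "((\<lambda>s. snd (F s z) \<bullet> snd (F s z) / 2) has_derivative
        (*) (snd (F u z) \<bullet> - G (fst (F u z)))) (at u)"
      using DERIV_cdivide[OF has_real_derivative_inner_self[OF has_vector_derivative_velocity], where c=2]
      by (simp add: has_field_derivative_def)
    have "((\<lambda>s. fst (F s z)) has_derivative (\<lambda>h. h *\<^sub>R snd (F u z))) (at u)"
      using has_vector_derivative_position by (simp add: has_vector_derivative_def)
    from has_derivative_compose[OF this has_derivative_potential]
    have "((\<lambda>s. \<Phi> (fst (F s z))) has_derivative (\<lambda>h. G (fst (F u z)) \<bullet> (h *\<^sub>R snd (F u z)))) (at u)"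
      by simp
    from has_derivative_add[OF kinetic this] show ?thesis
      unfolding e_def by (rule has_derivative_eq_rhs) (auto simp: fun_eq_iff inner_commute algebra_simps)
  qed
  then have "e s = e 0"
    using has_derivative_zero_constant[of UNIV e] by (metis convex_UNIV UNIV_I)
  then show ?thesis by (simp add: e_def flow_zero power2_norm_eq_inner)
qed

lemma speed_bound:
  assumes "\<And>x. m \<le> \<Phi> x"
  shows "norm (snd (F s z))^2 \<le> norm (snd z)^2 + 2 * (\<Phi> (fst z) - m)"
  using energy_conservation[of s z] assms[of "fst (F s z)"] by simp

lemma potential_along_flow_le: "\<Phi> (fst (F s z)) \<le> norm (snd z)^2 / 2 + \<Phi> (fst z)"
  using energy_conservation[of s z] by (smt (verit) zero_le_power2 divide_nonneg_pos)

lemma position_increment_le: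
  assumes "0 \<le> s" "\<And>u. u \<in> {0..s} \<Longrightarrow> norm (snd (F u z)) \<le> V"
  shows "norm (fst (F s z) - fst z) \<le> V * s"
  using norm_increment_le[of s "\<lambda>u. fst (F u z)" "\<lambda>u. snd (F u z)" V] assms has_vector_derivative_position
  by (simp add: flow_zero)

lemma velocity_increment_le:
  assumes "0 \<le> s" "\<And>u. u \<in> {0..s} \<Longrightarrow> norm (G (fst (F u z))) \<le> B"
  shows "norm (snd (F s z) - snd z) \<le> B * s"
  using norm_increment_le[of s "\<lambda>u. snd (F u z)" "\<lambda>u. - G (fst (F u z))" B] assms
    has_vector_derivative_velocity
  by (simp add: flow_zero)

lemma position_taylor_le:
  assumes "0 \<le> s" "0 \<le> B" "\<And>u. u \<in> {0..s} \<Longrightarrow> norm (G (fst (F u z))) \<le> B"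
  shows "norm (fst (F s z) - fst z - s *\<^sub>R snd z) \<le> B * s * s"
proof -
  have "norm ((fst (F s z) - s *\<^sub>R snd z) - (fst (F 0 z) - 0 *\<^sub>R snd z)) \<le> (B * s) * s"
  proof (rule norm_increment_le[where \<phi>' = "\<lambda>u. snd (F u z) - snd z"])
    fix u assume u: "u \<in> {0..s}"
    show "((\<lambda>u. fst (F u z) - u *\<^sub>R snd z) has_vector_derivative snd (F u z) - snd z) (at u)"
      by (auto intro!: derivative_eq_intros has_vector_derivative_position)
    have "norm (snd (F u z) - snd z) \<le> B * u"
      using velocity_increment_le[of u] u assms(3) by auto
    also have "\<dots> \<le> B * s"
      using u \<open>0 \<le> B\<close> by (auto intro: mult_left_mono)
    finally show "norm (snd (F u z) - snd z) \<le> B * s" .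
  qed (use assms in auto)
  then show ?thesis by (simp add: flow_zero algebra_simps)
qed

lemma flow_dist_le:
  assumes "0 \<le> \<tau>" "0 \<le> L"
    and lip: "\<And>u. u \<in> {0..\<tau>} \<Longrightarrow>
      norm (G (fst (F u z1)) - G (fst (F u z2))) \<le> L * norm (fst (F u z1) - fst (F u z2))"
  shows "norm (F \<tau> z1 - F \<tau> z2) \<le> exp ((1 + L) * \<tau>) * norm (z1 - z2)"
proof -
  define dx where "dx s = fst (F s z1) - fst (F s z2)" for s
  define dv where "dv s = snd (F s z1) - snd (F s z2)" for s
  define dG where "dG s = G (fst (F s z1)) - G (fst (F s z2))" for s
  define q where "q s = dx s \<bullet> dx s + dv s \<bullet> dv s" for s
  have q_eq: "q s = (norm (F s z1 - F s z2))\<^sup>2" for s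
    by (simp add: q_def dx_def dv_def norm_Pair power2_norm_eq_inner[symmetric] norm_prod_def)
  have "(dx has_vector_derivative dv u) (at u)" for u
    unfolding dx_def dv_def by (intro has_vector_derivative_diff has_vector_derivative_position)
  moreover have "(dv has_vector_derivative - dG u) (at u)" for u
    unfolding dv_def dG_def using has_vector_derivative_diff[OF has_vector_derivative_velocity
      has_vector_derivative_velocity] by simp
  ultimately have q_deriv: "(q has_real_derivative 2 * (dx u \<bullet> dv u) + 2 * (dv u \<bullet> - dG u)) (at u)" for u
    unfolding q_def by (intro DERIV_add has_real_derivative_inner_self)
  have "2 * (dx u \<bullet> dv u) + 2 * (dv u \<bullet> - dG u) \<le> (1 + L) * q u" if u: "u \<in> {0..\<tau>}" for u
  proof -
    have "2 * (dx u \<bullet> dv u) \<le> 2 * (norm (dx u) * norm (dv u))"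
      using norm_cauchy_schwarz[of "dx u" "dv u"] by simp
    moreover have "dv u \<bullet> - dG u \<le> norm (dv u) * (L * norm (dx u))"
      using norm_cauchy_schwarz[of "dv u" "- dG u"] lip[OF u]
      by (smt (verit) dG_def dx_def mult_left_mono norm_ge_zero norm_minus_cancel)
    moreover have sq: "2 * (norm (dx u) * norm (dv u)) \<le> (norm (dx u))\<^sup>2 + (norm (dv u))\<^sup>2"
      using sum_squares_bound[of "norm (dx u)" "norm (dv u)"] by (simp add: algebra_simps power2_eq_square)
    moreover have "q u = (norm (dx u))\<^sup>2 + (norm (dv u))\<^sup>2"
      by (simp add: q_def power2_norm_eq_inner)
    ultimately show ?thesis
      using mult_left_mono[OF sq \<open>0 \<le> L\<close>] by (simp add: algebra_simps)
  qed
  then have "q \<tau> \<le> exp ((1 + L) * \<tau>) * q 0"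
    using gronwall_has_real_derivative[OF \<open>0 \<le> \<tau>\<close> q_deriv] by blast
  also have "\<dots> \<le> (exp ((1 + L) * \<tau>) * norm (z1 - z2))\<^sup>2"
  proof -
    have "1 \<le> exp ((1 + L) * \<tau>)" using assms by simp
    then have "exp ((1 + L) * \<tau>) \<le> (exp ((1 + L) * \<tau>))\<^sup>2" by (simp add: power2_eq_square)
    then show ?thesis by (simp add: q_eq flow_zero power_mult_distrib mult_right_mono)
  qed
  finally show ?thesis
    unfolding q_eq by (rule power2_le_imp_le) simp
qed

lemma trajectory_bound:
  assumes m: "\<And>x. m \<le> \<Phi> x" and M: "\<And>x. norm x \<le> a \<Longrightarrow> \<Phi> x \<le> M"
    and z: "norm (fst z) \<le> a" "norm (snd z) \<le> b" and s: "0 \<le> s" "s \<le> T"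
  shows "norm (snd (F s z)) \<le> sqrt (b\<^sup>2 + 2 * (M - m))"
    and "norm (fst (F s z)) \<le> a + T * sqrt (b\<^sup>2 + 2 * (M - m))"
proof -
  have speed: "norm (snd (F u z)) \<le> sqrt (b\<^sup>2 + 2 * (M - m))" for u
  proof (rule real_le_rsqrt)
    have "(norm (snd z))\<^sup>2 \<le> b\<^sup>2" using z(2) by (simp add: power_mono)
    then show "(norm (snd (F u z)))\<^sup>2 \<le> b\<^sup>2 + 2 * (M - m)"
      using speed_bound[OF m, of u z] M[OF z(1)] by simp
  qed
  then show "norm (snd (F s z)) \<le> sqrt (b\<^sup>2 + 2 * (M - m))" .
  have "norm (fst (F s z) - fst z) \<le> sqrt (b\<^sup>2 + 2 * (M - m)) * s"
    using position_increment_le[OF s(1)] speed by blast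
  also have "\<dots> \<le> T * sqrt (b\<^sup>2 + 2 * (M - m))"
  proof -
    have "0 \<le> sqrt (b\<^sup>2 + 2 * (M - m))"
      using speed[of 0] norm_ge_zero[of "snd (F 0 z)"] by linarith
    then show ?thesis
      using s by (simp add: mult.commute mult_right_mono)
  qed
  finally show "norm (fst (F s z)) \<le> a + T * sqrt (b\<^sup>2 + 2 * (M - m))"
    using z(1) norm_triangle_sub[of "fst (F s z)" "fst z"] by linarith
qed

lemma lipschitz_on_flow:
  assumes m: "\<And>x. m \<le> \<Phi> x" and M: "\<And>x. norm x \<le> a \<Longrightarrow> \<Phi> x \<le> M" and "0 \<le> L"
    and GL: "\<And>x y. norm x \<le> a + T * sqrt (a\<^sup>2 + 2 * (M - m)) \<Longrightarrow>
      norm y \<le> a + T * sqrt (a\<^sup>2 + 2 * (M - m)) \<Longrightarrow> norm (G x - G y) \<le> L * norm (x - y)"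
    and \<tau>: "0 \<le> \<tau>" "\<tau> \<le> T"
  shows "(exp ((1 + L) * T))-lipschitz_on (cball 0 a) (F \<tau>)"
proof (rule lipschitz_onI)
  fix z1 z2 :: "'n state" assume "z1 \<in> cball 0 a" "z2 \<in> cball 0 a"
  then have z: "norm (fst z1) \<le> a" "norm (snd z1) \<le> a" "norm (fst z2) \<le> a" "norm (snd z2) \<le> a"
    using norm_fst_snd_le[of z1 a] norm_fst_snd_le[of z2 a] by auto
  have "norm (F \<tau> z1 - F \<tau> z2) \<le> exp ((1 + L) * \<tau>) * norm (z1 - z2)"
  proof (rule flow_dist_le[OF \<tau>(1) \<open>0 \<le> L\<close>])
    fix u assume "u \<in> {0..\<tau>}"
    then show "norm (G (fst (F u z1)) - G (fst (F u z2))) \<le> L * norm (fst (F u z1) - fst (F u z2))"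
      using z \<tau> by (intro GL trajectory_bound(2)[OF m M]) auto
  qed
  also have "\<dots> \<le> exp ((1 + L) * T) * norm (z1 - z2)"
    using \<tau> \<open>0 \<le> L\<close> by (intro mult_right_mono) (auto intro!: mult_left_mono)
  finally show "dist (F \<tau> z1) (F \<tau> z2) \<le> exp ((1 + L) * T) * dist z1 z2"
    by (simp add: dist_norm)
qed simp

lemma continuous_on_flow:
  assumes "0 \<le> \<tau>"
  shows "continuous_on UNIV (F \<tau>)"
proof -
  obtain m where m: "\<And>x. m \<le> \<Phi> x"
    using potential_bounded_below by blast
  have "isCont (F \<tau>) z" for z
  proof -
    define a where "a = norm z + 1"
    obtain M where M: "\<And>x. norm x \<le> a \<Longrightarrow> \<Phi> x \<le> M"
      using potential_bounded_on_cball by blast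
    obtain L where "0 \<le> L" "\<And>x y. norm x \<le> a + \<tau> * sqrt (a\<^sup>2 + 2 * (M - m)) \<Longrightarrow>
        norm y \<le> a + \<tau> * sqrt (a\<^sup>2 + 2 * (M - m)) \<Longrightarrow> norm (G x - G y) \<le> L * norm (x - y)"
      using lipschitz_on_cball_gradient by blast
    from lipschitz_on_flow[OF m M this assms order_refl]
    have "continuous_on (cball 0 a) (F \<tau>)"
      by (rule lipschitz_on_continuous_on)
    moreover have "z \<in> interior (cball 0 a)"
      by (simp add: a_def)
    ultimately show ?thesis
      by (rule continuous_on_interior)
  qed
  then show ?thesis
    by (simp add: continuous_at_imp_continuous_on)
qed

lemma borel_measurable_flow: "0 \<le> \<tau> \<Longrightarrow> F \<tau> \<in> borel_measurable borel"
  by (rule borel_measurable_continuous_onI[OF continuous_on_flow])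

lemma continuous_on_position_map:
  "0 \<le> \<tau> \<Longrightarrow> continuous_on UNIV (\<lambda>w. fst (F \<tau> (y, w)))"
  by (intro continuous_on_compose2[OF continuous_on_flow] continuous_intros) auto

lemma state_control:
  assumes m: "\<And>x. m \<le> \<Phi> x" and M: "\<And>x. norm x \<le> 1 \<Longrightarrow> \<Phi> x \<le> M"
    and B: "0 \<le> B" "\<And>x. norm x \<le> 2 \<Longrightarrow> norm (G x) \<le> B"
    and L: "0 \<le> L" "\<And>x y. norm x \<le> 2 \<Longrightarrow> norm y \<le> 2 \<Longrightarrow> norm (G x - G y) \<le> L * norm (x - y)"
    and \<tau>1: "\<tau>1 * (sqrt (1 + 2 * (M - m)) + B) \<le> 1 / 2"
    and \<tau>: "0 < \<tau>" "\<tau> \<le> \<tau>1"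
  shows "cball 0 (1 / 2) \<subseteq> F \<tau> ` cball 0 1"
    and "(exp ((1 + L) * \<tau>1))-lipschitz_on (cball 0 1) (F \<tau>)"
proof -
  define V where "V = sqrt (1 + 2 * (M - m))"
  have "0 \<le> V" using m[of 0] M[of 0] by (simp add: V_def)
  have "0 \<le> \<tau>1" using \<tau> by linarith
  have "\<tau>1 * V + \<tau>1 * B \<le> 1 / 2"
    using \<tau>1 by (simp only: V_def distrib_left)
  then have "\<tau>1 * V \<le> 1"
    using mult_nonneg_nonneg[OF \<open>0 \<le> \<tau>1\<close> B(1)] by linarith
  have bounds: "norm (fst (F u z)) \<le> 2" "norm (snd (F u z)) \<le> V"
    if z: "norm z \<le> 1" and u: "0 \<le> u" "u \<le> \<tau>1" for z u
  proof -
    have "norm (fst (F u z)) \<le> 1 + \<tau>1 * V"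
      using trajectory_bound(2)[OF m M, where z=z and b=1 and s=u and T=\<tau>1] norm_fst_snd_le[OF z] u
      by (simp add: V_def)
    then show "norm (fst (F u z)) \<le> 2" using \<open>\<tau>1 * V \<le> 1\<close> by simp
    show "norm (snd (F u z)) \<le> V"
      using trajectory_bound(1)[OF m M, where z=z and b=1 and s=u and T=\<tau>1] norm_fst_snd_le[OF z] u
      by (simp add: V_def)
  qed
  show "cball 0 (1 / 2) \<subseteq> F \<tau> ` cball 0 1"
  proof (rule cball_subset_image_near_dilation[where \<tau>=1 and \<delta>="1 / 2"])
    show "continuous_on (cball 0 1) (F \<tau>)"
      using \<tau> by (intro continuous_on_subset[OF continuous_on_flow]) auto
    fix z :: "'n state" assume z: "norm z \<le> 1"
    have "norm (fst (F \<tau> z) - fst z) \<le> V * \<tau>"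
      using position_increment_le[of \<tau> z V] bounds(2)[OF z] \<tau> by auto
    moreover have "norm (snd (F \<tau> z) - snd z) \<le> B * \<tau>"
      using velocity_increment_le[of \<tau> z B] B(2) bounds(1)[OF z] \<tau> by auto
    moreover have "norm (F \<tau> z - z) \<le> norm (fst (F \<tau> z - z)) + norm (snd (F \<tau> z - z))"
      using norm_Pair_le[of "fst (F \<tau> z - z)" "snd (F \<tau> z - z)"] by (simp only: prod.collapse)
    ultimately have "norm (F \<tau> z - z) \<le> \<tau> * V + \<tau> * B"
      by (simp add: algebra_simps)
    also have "\<dots> \<le> \<tau>1 * V + \<tau>1 * B"
      using \<tau> \<open>0 \<le> V\<close> B(1) by (intro add_mono mult_right_mono) auto
    finally show "norm (F \<tau> z - 1 *\<^sub>R z) \<le> 1 / 2"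
      using \<open>\<tau>1 * V + \<tau>1 * B \<le> 1 / 2\<close> by simp
  qed simp_all
  show "(exp ((1 + L) * \<tau>1))-lipschitz_on (cball 0 1) (F \<tau>)"
  proof (rule lipschitz_on_flow[OF m M L(1) _ _ \<tau>(2)])
    fix x y :: "real^'n"
    assume "norm x \<le> 1 + \<tau>1 * sqrt (1\<^sup>2 + 2 * (M - m))" "norm y \<le> 1 + \<tau>1 * sqrt (1\<^sup>2 + 2 * (M - m))"
    then show "norm (G x - G y) \<le> L * norm (x - y)"
      using \<open>\<tau>1 * V \<le> 1\<close> by (intro L(2)) (auto simp: V_def)
  qed (use \<tau> in auto)
qed

end

(* Up to time tau0, trajectories starting at positions in cball 0 R with velocities in
   cball 0 velocity_radius stay in cball 0 (3 * R + 4), where B bounds G and L is a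
   Lipschitz constant of G. *)
locale short_time_flow = hamiltonian_flow \<Phi> G F for \<Phi> :: "real^'n \<Rightarrow> real" and G F +
  fixes m M R B L \<tau>0 :: real
  assumes potential_lower: "\<And>x. m \<le> \<Phi> x"
    and potential_upper: "\<And>x. norm x \<le> R \<Longrightarrow> \<Phi> x \<le> M" and radius_nonneg: "0 \<le> R"
    and gradient_bound: "0 \<le> B" "\<And>x. norm x \<le> 3 * R + 4 \<Longrightarrow> norm (G x) \<le> B"
    and gradient_lipschitz: "0 \<le> L"
      "\<And>x y. norm x \<le> 3 * R + 4 \<Longrightarrow> norm y \<le> 3 * R + 4 \<Longrightarrow> norm (G x - G y) \<le> L * norm (x - y)"
    and short_time: "0 < \<tau>0" "\<tau>0 \<le> 1" "\<tau>0 * B \<le> 1" "\<tau>0 * sqrt (2 * (M - m)) \<le> 1"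
begin

definition velocity_radius :: real where
  "velocity_radius = 2 * (R + 1) / \<tau>0 + \<tau>0 * B"

lemma velocity_radius_pos: "0 < velocity_radius"
  using short_time radius_nonneg gradient_bound by (simp add: velocity_radius_def add_pos_nonneg)

lemma position_bound:
  assumes "norm y \<le> R" "norm w \<le> velocity_radius" "0 \<le> u" "u \<le> \<tau>0"
  shows "norm (fst (F u (y, w))) \<le> 3 * R + 4"
proof -
  have "0 \<le> M - m" using potential_lower[of 0] potential_upper[of 0] radius_nonneg by simp
  have "\<tau>0 * (\<tau>0 * B) \<le> 1"
    using mult_left_le[OF short_time(3), of \<tau>0] short_time(1,2) by linarith
  have "norm (fst (F u (y, w))) \<le> R + \<tau>0 * sqrt (velocity_radius\<^sup>2 + 2 * (M - m))"
    by (rule trajectory_bound(2)[OF potential_lower potential_upper]) (use assms in auto)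
  also have "\<dots> \<le> R + \<tau>0 * (velocity_radius + sqrt (2 * (M - m)))"
    using sqrt_add_le_add_sqrt[of "velocity_radius\<^sup>2" "2 * (M - m)"] velocity_radius_pos
      \<open>0 \<le> M - m\<close> short_time(1)
    by (simp add: mult_left_mono)
  also have "\<dots> = R + 2 * (R + 1) + \<tau>0 * (\<tau>0 * B) + \<tau>0 * sqrt (2 * (M - m))"
    using short_time(1) by (simp add: velocity_radius_def field_simps)
  also have "\<dots> \<le> 3 * R + 4"
    using short_time(4) \<open>\<tau>0 * (\<tau>0 * B) \<le> 1\<close> by argo
  finally show ?thesis .
qed

(* x(tau; y, w) = y + tau w + O(tau^2): a Brouwer fixed point gives a velocity reaching
   any target. *)
lemma position_map_surjective:
  assumes \<tau>: "\<tau>0 / 2 \<le> \<tau>" "\<tau> \<le> \<tau>0" and y: "norm y \<le> R"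
  shows "cball 0 1 \<subseteq> (\<lambda>w. fst (F \<tau> (y, w))) ` cball 0 velocity_radius"
proof
  have "0 < \<tau>" using \<tau> short_time(1) by linarith
  have surj: "cball 0 (1 + R) \<subseteq> (\<lambda>w. fst (F \<tau> (y, w)) - y) ` cball 0 velocity_radius"
  proof (rule cball_subset_image_near_dilation[OF _ \<open>0 < \<tau>\<close> velocity_radius_pos])
    have "continuous_on (cball 0 velocity_radius) (\<lambda>w. fst (F \<tau> (y, w)))"
      using \<open>0 < \<tau>\<close> by (intro continuous_on_subset[OF continuous_on_position_map]) auto
    then show "continuous_on (cball 0 velocity_radius) (\<lambda>w. fst (F \<tau> (y, w)) - y)"
      by (rule continuous_on_diff[OF _ continuous_on_const])
    fix w :: "real^'n" assume "norm w \<le> velocity_radius"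
    then show "norm (fst (F \<tau> (y, w)) - y - \<tau> *\<^sub>R w) \<le> B * \<tau> * \<tau>"
      using position_taylor_le[of \<tau> B "(y, w)"] \<open>0 < \<tau>\<close> gradient_bound position_bound y \<tau>
      by auto
  next
    have "(1 + R) * \<tau>0 \<le> (1 + R) * (2 * \<tau>)"
      using \<tau> radius_nonneg by (intro mult_left_mono) auto
    then have "1 + R \<le> \<tau> * (2 * (R + 1) / \<tau>0)"
      using short_time(1) by (simp add: field_simps)
    moreover have "B * \<tau> * \<tau> \<le> \<tau> * (\<tau>0 * B)"
      using \<tau> \<open>0 < \<tau>\<close> gradient_bound(1) by (simp add: mult_left_mono mult_right_mono mult.commute)
    ultimately show "1 + R + B * \<tau> * \<tau> \<le> \<tau> * velocity_radius"
      by (simp add: velocity_radius_def distrib_left)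
  qed
  fix x :: "real^'n" assume "x \<in> cball 0 1"
  then have "x - y \<in> cball 0 (1 + R)"
    using y norm_triangle_ineq4[of x y] by simp
  then obtain w where "x - y = fst (F \<tau> (y, w)) - y" "w \<in> cball 0 velocity_radius"
    using surj by (meson imageE subsetD)
  then show "x \<in> (\<lambda>w. fst (F \<tau> (y, w))) ` cball 0 velocity_radius"
    by (intro image_eqI[of x _ w]) simp_all
qed

lemma lipschitz_on_position_map:
  assumes \<tau>: "0 \<le> \<tau>" "\<tau> \<le> \<tau>0" and y: "norm y \<le> R"
  shows "(exp ((1 + L) * \<tau>0))-lipschitz_on (cball 0 velocity_radius) (\<lambda>w. fst (F \<tau> (y, w)))"
proof (rule lipschitz_onI)
  fix w1 w2 :: "real^'n" assume w: "w1 \<in> cball 0 velocity_radius" "w2 \<in> cball 0 velocity_radius"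
  have "norm (F \<tau> (y, w1) - F \<tau> (y, w2)) \<le> exp ((1 + L) * \<tau>) * norm ((y, w1) - (y, w2))"
  proof (rule flow_dist_le[OF \<tau>(1) gradient_lipschitz(1)])
    fix u assume "u \<in> {0..\<tau>}"
    then show "norm (G (fst (F u (y, w1))) - G (fst (F u (y, w2)))) \<le>
        L * norm (fst (F u (y, w1)) - fst (F u (y, w2)))"
      using w \<tau> y by (intro gradient_lipschitz(2) position_bound) auto
  qed
  also have "\<dots> \<le> exp ((1 + L) * \<tau>0) * norm (w1 - w2)"
    using \<tau> gradient_lipschitz(1) by (auto simp: norm_Pair intro!: mult_right_mono mult_left_mono)
  finally have "norm (F \<tau> (y, w1) - F \<tau> (y, w2)) \<le> exp ((1 + L) * \<tau>0) * norm (w1 - w2)" .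
  from norm_fst_snd_le(1)[OF this]
  show "dist (fst (F \<tau> (y, w1))) (fst (F \<tau> (y, w2))) \<le> exp ((1 + L) * \<tau>0) * dist w1 w2"
    by (simp add: dist_norm)
qed simp

end

section \<open>Estimates uniform in the flow\<close>

context potential
begin

lemma hamiltonian_flowI: "ham_flow \<Phi> F \<Longrightarrow> hamiltonian_flow \<Phi> G F"
  by (simp add: hamiltonian_flow_def hamiltonian_flow_axioms_def potential_axioms)

(* By energy conservation, trajectories from ball 0 K \<times> ball 0 K stay in a sublevel set
   of the potential. *)
lemma confinement:
  obtains R where "0 \<le> R"
    "\<And>F s (z :: 'n state). ham_flow \<Phi> F \<Longrightarrow> z \<in> ball 0 K \<times> ball 0 K \<Longrightarrow> norm (fst (F s z)) \<le> R"
proof -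
  obtain M where M: "\<And>x. norm x \<le> K \<Longrightarrow> \<Phi> x \<le> M"
    using potential_bounded_on_cball by blast
  obtain R where R: "0 \<le> R" "\<And>x. \<Phi> x \<le> K\<^sup>2 / 2 + M \<Longrightarrow> norm x \<le> R"
    using sublevel_bounded by blast
  show thesis
  proof (rule that[OF R(1)])
    fix F s and z :: "'n state" assume "ham_flow \<Phi> F" "z \<in> ball 0 K \<times> ball 0 K"
    then interpret hamiltonian_flow \<Phi> G F
      by (simp add: hamiltonian_flowI)
    have "norm (fst z) \<le> K" "(norm (snd z))\<^sup>2 \<le> K\<^sup>2"
      using \<open>z \<in> ball 0 K \<times> ball 0 K\<close> by (auto simp: mem_Times_iff intro!: power_mono)
    then have "\<Phi> (fst (F s z)) \<le> K\<^sup>2 / 2 + M"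
      using potential_along_flow_le[of s z] M by (smt (verit) field_sum_of_halves)
    then show "norm (fst (F s z)) \<le> R"
      by (rule R(2))
  qed
qed

lemma fibre_control:
  assumes "0 \<le> R" "0 < T"
  obtains \<tau>0 \<kappa> where "0 < \<tau>0" "\<tau>0 \<le> T" "0 < \<kappa>"
    "\<And>F \<tau> (y :: real^'n) S. ham_flow \<Phi> F \<Longrightarrow> \<tau> \<in> {\<tau>0 / 2..\<tau>0} \<Longrightarrow> norm y \<le> R \<Longrightarrow> S \<in> sets borel \<Longrightarrow>
      S \<subseteq> cball 0 1 \<Longrightarrow> \<kappa> * measure lborel S \<le> measure maxwellian {w. fst (F \<tau> (y, w)) \<in> S}"
proof -
  obtain m where m: "\<And>x. m \<le> \<Phi> x"
    using potential_bounded_below by blast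
  obtain M where M: "\<And>x. norm x \<le> R \<Longrightarrow> \<Phi> x \<le> M"
    using potential_bounded_on_cball by blast
  obtain B where B: "0 \<le> B" "\<And>x. norm x \<le> 3 * R + 4 \<Longrightarrow> norm (G x) \<le> B"
    using gradient_bounded_on_cball by blast
  obtain L where L: "0 \<le> L" "\<And>x y. norm x \<le> 3 * R + 4 \<Longrightarrow> norm y \<le> 3 * R + 4 \<Longrightarrow>
      norm (G x - G y) \<le> L * norm (x - y)"
    using lipschitz_on_cball_gradient by blast
  obtain \<tau>0 where \<tau>0: "0 < \<tau>0" "\<tau>0 \<le> T" "\<tau>0 \<le> 1" "\<tau>0 * B \<le> 1" "\<tau>0 * sqrt (2 * (M - m)) \<le> 1"
    using small_time[OF \<open>0 < T\<close> B(1), of "sqrt (2 * (M - m))"] m[of 0] M[of 0] \<open>0 \<le> R\<close> by force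
  define W where "W = 2 * (R + 1) / \<tau>0 + \<tau>0 * B"
  define \<kappa> where "\<kappa> = (2 * pi) powr (- real CARD('n) / 2) * exp (- W\<^sup>2 / 2) /
    (2 * exp ((1 + L) * \<tau>0) * CARD('n)) ^ CARD('n)"
  show thesis
  proof (rule that[OF \<tau>0(1,2)])
    show "0 < \<kappa>" by (simp add: \<kappa>_def)
    fix F \<tau> and y :: "real^'n" and S :: "(real^'n) set"
    assume "ham_flow \<Phi> F" and \<tau>: "\<tau> \<in> {\<tau>0 / 2..\<tau>0}" and y: "norm y \<le> R"
      and S: "S \<in> sets borel" "S \<subseteq> cball 0 1"
    then interpret short_time_flow \<Phi> G F m M R B L \<tau>0
      using m M \<open>0 \<le> R\<close> B L \<tau>0(1,3-5) by unfold_locales (auto simp: hamiltonian_flow_axioms_def)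
    have "0 \<le> \<tau>" using \<tau> \<tau>0(1) by simp
    show "\<kappa> * measure lborel S \<le> measure maxwellian {w. fst (F \<tau> (y, w)) \<in> S}"
      using maxwellian_preimage_ge[OF lipschitz_on_position_map[OF \<open>0 \<le> \<tau>\<close> _ y]
        borel_measurable_continuous_onI[OF continuous_on_position_map[OF \<open>0 \<le> \<tau>\<close>]] S(1)]
        position_map_surjective[OF _ _ y] S(2) \<tau>
      by (auto simp: \<kappa>_def W_def velocity_radius_def vimage_def)
  qed
qed

lemma state_spread:
  assumes "0 < T"
  obtains \<tau>1 \<kappa> where "0 < \<tau>1" "\<tau>1 \<le> T" "0 < \<kappa>"
    "\<And>F \<tau> (A :: 'n state set). ham_flow \<Phi> F \<Longrightarrow> \<tau> \<in> {0<..\<tau>1} \<Longrightarrow> A \<in> sets borel \<Longrightarrow>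
      \<kappa> * measure lborel (A \<inter> cball 0 (1 / 2)) \<le> measure lborel (F \<tau> -` A \<inter> cball 0 1)"
proof -
  obtain m where m: "\<And>x. m \<le> \<Phi> x"
    using potential_bounded_below by blast
  obtain M where M: "\<And>x. norm x \<le> 1 \<Longrightarrow> \<Phi> x \<le> M"
    using potential_bounded_on_cball by blast
  obtain B where B: "0 \<le> B" "\<And>x. norm x \<le> 2 \<Longrightarrow> norm (G x) \<le> B"
    using gradient_bounded_on_cball by blast
  obtain L where L: "0 \<le> L" "\<And>x y. norm x \<le> 2 \<Longrightarrow> norm y \<le> 2 \<Longrightarrow> norm (G x - G y) \<le> L * norm (x - y)"
    using lipschitz_on_cball_gradient by blast
  have "0 \<le> sqrt (1 + 2 * (M - m))"
    using m[of 0] M[of 0] by simp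
  then obtain \<tau>1 where \<tau>1: "0 < \<tau>1" "\<tau>1 \<le> T" "\<tau>1 * (2 * (sqrt (1 + 2 * (M - m)) + B)) \<le> 1"
    using small_time[OF \<open>0 < T\<close>, of "2 * (sqrt (1 + 2 * (M - m)) + B)" 0] B(1) by force
  define C where "C = (2 * exp ((1 + L) * \<tau>1) * DIM('n state)) ^ DIM('n state)"
  have "0 < C" by (simp add: C_def)
  show thesis
  proof (rule that[OF \<tau>1(1,2), of "1 / C"])
    show "0 < 1 / C" using \<open>0 < C\<close> by simp
    fix F \<tau> and A :: "'n state set" assume "ham_flow \<Phi> F" and \<tau>: "\<tau> \<in> {0<..\<tau>1}" and A: "A \<in> sets borel"
    then interpret hamiltonian_flow \<Phi> G F
      by (simp add: hamiltonian_flowI)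
    have "\<tau>1 * (sqrt (1 + 2 * (M - m)) + B) \<le> 1 / 2"
      using \<tau>1(3) by (simp add: algebra_simps)
    note control = state_control[OF m M B L this, of \<tau>]
    have "A \<inter> cball 0 (1 / 2) \<subseteq> F \<tau> ` cball 0 1"
      using control(1) \<tau> by auto
    then have "measure lborel (A \<inter> cball 0 (1 / 2)) \<le> C * measure lborel (F \<tau> -` (A \<inter> cball 0 (1 / 2)) \<inter> cball 0 1)"
      unfolding C_def using A \<tau>
      by (intro measure_Lipschitz_preimage_ge[OF control(2) bounded_cball _ borel_measurable_flow]) auto
    also have "\<dots> \<le> C * measure lborel (F \<tau> -` A \<inter> cball 0 1)"
    proof (intro mult_left_mono measure_mono_fmeasurable)
      have "F \<tau> -` A \<in> sets borel" "F \<tau> -` cball 0 (1 / 2) \<in> sets borel"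
        using measurable_sets_borel[OF borel_measurable_flow] A \<tau> by auto
      moreover have "bounded (F \<tau> -` A \<inter> cball 0 1)"
        by (rule bounded_Int) simp
      ultimately show "F \<tau> -` (A \<inter> cball 0 (1 / 2)) \<inter> cball 0 1 \<in> sets lborel"
        "F \<tau> -` A \<inter> cball 0 1 \<in> fmeasurable lborel"
        by (auto simp: fmeasurable_def dest: emeasure_bounded_finite)
    qed (use \<open>0 < C\<close> in auto)
    finally show "1 / C * measure lborel (A \<inter> cball 0 (1 / 2)) \<le> measure lborel (F \<tau> -` A \<inter> cball 0 1)"
      using \<open>0 < C\<close> by (simp add: field_simps)
  qed
qed

end

section \<open>Mild solutions\<close>

(* The assumption solution is the body of kinetic_solution_def for the flow F. *)
locale mild_solution =
  fixes F :: "real \<Rightarrow> ('n::finite) state \<Rightarrow> 'n state"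
    and f0 :: "'n state measure" and f :: "real \<Rightarrow> 'n state measure"
  assumes borel_measurable_flow: "\<And>\<tau>. 0 \<le> \<tau> \<Longrightarrow> F \<tau> \<in> borel_measurable borel"
    and prob_space_initial: "prob_space f0" and sets_initial: "sets f0 = sets borel"
    and solution: "(\<forall>t\<ge>0. prob_space (f t) \<and> sets (f t) = sets borel) \<and>
      (\<forall>t\<ge>0. \<forall>A\<in>sets borel.
        set_integrable lborel {0..t}
          (\<lambda>s. exp (-(t - s)) * measure (distr (distr (f s) borel fst \<Otimes>\<^sub>M maxwellian) borel (F (t - s))) A)
        \<and> measure (f t) A = exp (-t) * measure (distr f0 borel (F t)) A
            + (\<integral>s\<in>{0..t}. exp (-(t - s)) *
                 measure (distr (distr (f s) borel fst \<Otimes>\<^sub>M maxwellian) borel (F (t - s))) A \<partial>lborel))"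
begin

lemma prob_space_solution: "0 \<le> t \<Longrightarrow> prob_space (f t)"
  using solution by blast

lemma sets_solution: "0 \<le> t \<Longrightarrow> sets (f t) = sets borel"
  using solution by blast

lemmas duhamel = solution[THEN conjunct2, rule_format]

definition marginal :: "real \<Rightarrow> (real^'n) measure" where
  "marginal s = distr (f s) borel fst"

definition gain :: "real \<Rightarrow> 'n state measure" where
  "gain s = marginal s \<Otimes>\<^sub>M maxwellian"

lemma sets_marginal [simp]: "sets (marginal s) = sets borel"
  by (simp add: marginal_def)

lemma measurable_fst_solution: "0 \<le> s \<Longrightarrow> fst \<in> measurable (f s) (borel :: (real^'n) measure)"
  using measurable_cong_sets[OF sets_solution refl]
    borel_measurable_continuous_onI[OF continuous_on_fst[OF continuous_on_id]]
  by blast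

lemma prob_space_marginal: "0 \<le> s \<Longrightarrow> prob_space (marginal s)"
  unfolding marginal_def
  by (rule prob_space.prob_space_distr[OF prob_space_solution measurable_fst_solution])

lemma measure_marginal:
  assumes "0 \<le> s" "B \<in> sets borel"
  shows "measure (marginal s) B = measure (f s) (B \<times> UNIV)"
proof -
  have "space (f s) = UNIV"
    using sets_eq_imp_space_eq[OF sets_solution[OF assms(1)]] by simp
  then show ?thesis
    unfolding marginal_def using assms measurable_fst_solution[OF assms(1)]
    by (subst measure_distr) (auto simp: vimage_fst)
qed

lemma sets_gain: "sets (gain s) = sets borel"
proof -
  have "sets (gain s) = sets (borel \<Otimes>\<^sub>M (borel :: (real^'n) measure))"
    unfolding gain_def by (rule sets_pair_measure_cong) (simp_all add: maxwellian_def)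
  then show ?thesis by (simp only: borel_prod)
qed

lemma measure_distr_flow:
  assumes "0 \<le> \<tau>" "sets M = sets borel" "A \<in> sets borel"
  shows "measure (distr M borel (F \<tau>)) A = measure M (F \<tau> -` A)"
proof -
  have "space M = UNIV"
    using sets_eq_imp_space_eq[OF assms(2)] by simp
  moreover have "F \<tau> \<in> measurable M borel"
    using measurable_cong_sets[OF assms(2) refl] borel_measurable_flow[OF assms(1)] by blast
  ultimately show ?thesis
    using assms(3) by (simp add: measure_distr)
qed

lemma transport_le:
  assumes "0 \<le> t" "A \<in> sets borel"
  shows "exp (-t) * measure f0 (F t -` A) \<le> measure (f t) A"
proof -
  let ?gain = "\<integral>s\<in>{0..t}. exp (-(t - s)) *
      measure (distr (distr (f s) borel fst \<Otimes>\<^sub>M maxwellian) borel (F (t - s))) A \<partial>lborel"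
  have "0 \<le> ?gain"
    unfolding set_lebesgue_integral_def by (rule integral_nonneg_AE) (simp add: indicator_def)
  moreover have "measure (f t) A = exp (-t) * measure f0 (F t -` A) + ?gain"
    using duhamel[OF assms, THEN conjunct2]
    unfolding measure_distr_flow[OF assms(1) sets_initial assms(2)] .
  ultimately show ?thesis by linarith
qed

lemma gain_le:
  assumes "0 \<le> t - \<tau>b" "0 \<le> \<tau>a" "\<tau>a \<le> \<tau>b" "A \<in> sets borel" "0 \<le> c"
    and lower: "\<And>s. s \<in> {t - \<tau>b..t - \<tau>a} \<Longrightarrow> c \<le> measure (gain s) (F (t - s) -` A)"
  shows "exp (- \<tau>b) * c * (\<tau>b - \<tau>a) \<le> measure (f t) A"
proof -
  have "0 \<le> t" using assms by linarith
  let ?g = "\<lambda>s. exp (-(t - s)) * measure (distr (gain s) borel (F (t - s))) A"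
  have "exp (- \<tau>b) * c * ((t - \<tau>a) - (t - \<tau>b)) \<le> (\<integral>s\<in>{0..t}. ?g s \<partial>lborel)"
  proof (rule set_integral_ge_interval)
    show "set_integrable lborel {0..t} ?g"
      using duhamel[OF \<open>0 \<le> t\<close> \<open>A \<in> sets borel\<close>] by (simp add: gain_def marginal_def)
    fix s assume s: "s \<in> {t - \<tau>b..t - \<tau>a}"
    then have "exp (- \<tau>b) \<le> exp (-(t - s))" by simp
    moreover have "c \<le> measure (distr (gain s) borel (F (t - s))) A"
      using lower[OF s] measure_distr_flow[OF _ sets_gain \<open>A \<in> sets borel\<close>] s assms by simp
    ultimately show "exp (- \<tau>b) * c \<le> ?g s"
      using \<open>0 \<le> c\<close> by (intro mult_mono) auto
  qed (use assms in auto)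
  also have "\<dots> \<le> measure (f t) A"
    using duhamel[OF \<open>0 \<le> t\<close> \<open>A \<in> sets borel\<close>] transport_le[OF \<open>0 \<le> t\<close> \<open>A \<in> sets borel\<close>]
    by (simp add: gain_def marginal_def)
  finally show ?thesis by simp
qed

lemma marginal_mass_ge:
  assumes f0: "emeasure f0 (UNIV - Z) = 0" "Z \<in> sets borel"
    and confined: "\<And>z. z \<in> Z \<Longrightarrow> norm (fst (F s z)) \<le> R" and "0 \<le> s"
  shows "exp (-s) \<le> measure (marginal s) (cball 0 R)"
proof -
  interpret f0: prob_space f0 by (rule prob_space_initial)
  have space: "space f0 = UNIV"
    using sets_eq_imp_space_eq[OF sets_initial] by simp
  have Z: "Z \<in> f0.events" using f0(2) sets_initial by simp
  have "measure f0 (UNIV - Z) = 0"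
    using f0(1) by (simp add: f0.emeasure_eq_measure)
  then have "measure f0 Z = 1"
    using f0.prob_compl[OF Z] space by simp
  have X: "cball 0 R \<times> UNIV \<in> sets (borel :: 'n state measure)"
    by (simp add: borel_prod[symmetric])
  have "Z \<subseteq> F s -` (cball 0 R \<times> UNIV)"
    using confined by (auto simp: mem_Times_iff)
  then have "measure f0 Z \<le> measure f0 (F s -` (cball 0 R \<times> UNIV))"
    using measurable_sets_borel[OF borel_measurable_flow[OF \<open>0 \<le> s\<close>] X] sets_initial
    by (intro f0.finite_measure_mono) auto
  then have "exp (-s) \<le> exp (-s) * measure f0 (F s -` (cball 0 R \<times> UNIV))"
    using \<open>measure f0 Z = 1\<close> by simp
  also have "\<dots> \<le> measure (f s) (cball 0 R \<times> UNIV)"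
    by (rule transport_le[OF \<open>0 \<le> s\<close> X])
  also have "\<dots> = measure (marginal s) (cball 0 R)"
    by (simp add: measure_marginal[OF \<open>0 \<le> s\<close>])
  finally show ?thesis .
qed

lemma marginal_ge_lebesgue:
  assumes mass: "\<And>r. r \<in> {0..s} \<Longrightarrow> m \<le> measure (marginal r) (cball 0 R)"
    and fibre: "\<And>\<tau> y S. \<tau> \<in> {\<tau>0 / 2..\<tau>0} \<Longrightarrow> norm y \<le> R \<Longrightarrow> S \<in> sets borel \<Longrightarrow>
      S \<subseteq> cball 0 1 \<Longrightarrow> \<kappa> * measure lborel S \<le> measure maxwellian {w. fst (F \<tau> (y, w)) \<in> S}"
    and "0 \<le> m" "0 \<le> \<kappa>" "0 < \<tau>0" "\<tau>0 \<le> s" and B: "B \<in> sets borel"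
  shows "exp (- \<tau>0) * (m * \<kappa> * measure lborel (B \<inter> cball 0 1)) * (\<tau>0 / 2) \<le> measure (marginal s) B"
proof -
  define B' where "B' = B \<inter> cball 0 1"
  have B': "B' \<in> sets borel" "B' \<subseteq> cball 0 1"
    using B by (auto simp: B'_def)
  have A: "B' \<times> UNIV \<in> sets (borel :: 'n state measure)"
    using B' by (simp add: borel_prod[symmetric])
  have "exp (- \<tau>0) * (m * \<kappa> * measure lborel B') * (\<tau>0 - \<tau>0 / 2) \<le> measure (f s) (B' \<times> UNIV)"
  proof (rule gain_le[OF _ _ _ A])
    fix r assume r: "r \<in> {s - \<tau>0..s - \<tau>0 / 2}"
    then have "0 \<le> r" "s - r \<ge> 0" using assms by auto
    have "F (s - r) -` (B' \<times> UNIV) \<in> sets (gain r)"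
      using measurable_sets_borel[OF borel_measurable_flow[OF \<open>s - r \<ge> 0\<close>] A] by (simp add: sets_gain)
    note X = this[unfolded gain_def]
    have "\<kappa> * measure lborel B' * measure (marginal r) (cball 0 R) \<le> measure (gain r) (F (s - r) -` (B' \<times> UNIV))"
      unfolding gain_def
    proof (rule measure_pair_ge_fibrewise[OF prob_space_marginal[OF \<open>0 \<le> r\<close>] prob_space_maxwellian X])
      fix y :: "real^'n" assume "y \<in> cball 0 R"
      then show "\<kappa> * measure lborel B' \<le> measure maxwellian (Pair y -` F (s - r) -` (B' \<times> UNIV))"
        using fibre[of "s - r" y B'] r B' by (simp add: vimage_def mem_Times_iff)
    qed (use \<open>0 \<le> \<kappa>\<close> in auto)
    moreover have "m * (\<kappa> * measure lborel B') \<le> measure (marginal r) (cball 0 R) * (\<kappa> * measure lborel B')"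
      using mass[of r] r assms by (intro mult_right_mono) auto
    ultimately show "m * \<kappa> * measure lborel B' \<le> measure (gain r) (F (s - r) -` (B' \<times> UNIV))"
      by (simp add: algebra_simps)
  qed (use assms in auto)
  also have "\<dots> = measure (marginal s) B'"
    using measure_marginal[of s B'] B' assms by simp
  also have "\<dots> \<le> measure (marginal s) B"
    using prob_space.finite_measure[OF prob_space_marginal] B assms
    by (intro finite_measure.finite_measure_mono) (auto simp: B'_def)
  finally show ?thesis by (simp add: B'_def)
qed

lemma solution_ge_lebesgue:
  assumes marginal: "\<And>r B. r \<in> {s - \<tau>1..s - \<tau>1 / 2} \<Longrightarrow> B \<in> sets borel \<Longrightarrow>
      c * measure lborel (B \<inter> cball 0 1) \<le> measure (marginal r) B"
    and spread: "\<And>\<tau> A. \<tau> \<in> {0<..\<tau>1} \<Longrightarrow> A \<in> sets borel \<Longrightarrow>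
      \<kappa> * measure lborel (A \<inter> cball 0 (1 / 2)) \<le> measure lborel (F \<tau> -` A \<inter> cball 0 1)"
    and "0 \<le> c" "0 \<le> \<kappa>" "0 < \<tau>1" "\<tau>1 \<le> s" and A: "A \<in> sets borel"
  defines "m \<equiv> (2 * pi) powr (- real CARD('n) / 2) * exp (- 1 / 2)"
  shows "exp (- \<tau>1) * (c * m * \<kappa> * measure lborel (A \<inter> cball 0 (1 / 2))) * (\<tau>1 / 2) \<le> measure (f s) A"
proof -
  have "0 \<le> m" by (simp add: m_def)
  have "exp (- \<tau>1) * (c * m * \<kappa> * measure lborel (A \<inter> cball 0 (1 / 2))) * (\<tau>1 - \<tau>1 / 2) \<le> measure (f s) A"
  proof (rule gain_le[OF _ _ _ A])
    fix r assume r: "r \<in> {s - \<tau>1..s - \<tau>1 / 2}"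
    define X where "X = F (s - r) -` A"
    have "0 \<le> r" "s - r \<in> {0<..\<tau>1}" using r assms by auto
    have X: "X \<in> sets borel"
      using measurable_sets_borel[OF borel_measurable_flow A] \<open>s - r \<in> {0<..\<tau>1}\<close> by (simp add: X_def)
    have "\<kappa> * measure lborel (A \<inter> cball 0 (1 / 2)) \<le> measure lborel (X \<inter> cball 0 1)"
      using spread[OF \<open>s - r \<in> {0<..\<tau>1}\<close> A] by (simp add: X_def)
    also have "\<dots> \<le> measure lborel (X \<inter> cball 0 1 \<times> cball 0 1)"
    proof (rule measure_lborel_mono_bounded)
      show "X \<inter> cball 0 1 \<subseteq> X \<inter> cball 0 1 \<times> cball 0 1"
        using norm_fst_snd_le by (auto simp: mem_Times_iff)
      show "X \<inter> cball 0 1 \<in> sets borel"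
        by (intro sets.Int X borel_closed closed_cball)
      show "X \<inter> cball 0 1 \<times> cball 0 1 \<in> sets borel"
        by (intro sets.Int X borel_closed closed_Times closed_cball)
      show "bounded (X \<inter> cball 0 1 \<times> cball 0 1)"
        by (intro bounded_Int disjI2 bounded_Times bounded_cball)
    qed
    finally have "c * m * (\<kappa> * measure lborel (A \<inter> cball 0 (1 / 2))) \<le>
        c * m * measure lborel (X \<inter> cball 0 1 \<times> cball 0 1)"
      using \<open>0 \<le> c\<close> \<open>0 \<le> m\<close> by (simp add: mult_left_mono)
    also have "\<dots> \<le> measure (marginal r \<Otimes>\<^sub>M maxwellian) X"
    proof (rule measure_pair_ge_lebesgue[OF prob_space_marginal[OF \<open>0 \<le> r\<close>] sets_marginal
          prob_space_maxwellian sets_maxwellian cball_borel cball_borel bounded_cball bounded_cball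
          \<open>0 \<le> c\<close> \<open>0 \<le> m\<close> marginal[OF r] _ X])
      fix B :: "(real^'n) set" assume "B \<in> sets borel"
      then show "m * measure lborel (B \<inter> cball 0 1) \<le> measure maxwellian B"
        using maxwellian_ge_lebesgue[of B 1] by (simp add: m_def)
    qed
    finally show "c * m * \<kappa> * measure lborel (A \<inter> cball 0 (1 / 2)) \<le> measure (gain r) (F (s - r) -` A)"
      by (simp add: gain_def X_def mult.assoc)
  qed (use assms \<open>0 \<le> m\<close> in auto)
  then show ?thesis by simp
qed

end

context potential
begin

lemma kinetic_solution_mild:
  assumes "kinetic_solution \<Phi> f0 f" "prob_space f0" "sets f0 = sets borel"
  obtains F where "ham_flow \<Phi> F" "mild_solution F f0 f"
proof -
  have "\<And>F \<tau>. ham_flow \<Phi> F \<Longrightarrow> 0 \<le> \<tau> \<Longrightarrow> F \<tau> \<in> borel_measurable borel"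
    using hamiltonian_flow.borel_measurable_flow[OF hamiltonian_flowI] by blast
  then have "\<exists>F. ham_flow \<Phi> F \<and> mild_solution F f0 f"
    using assms unfolding kinetic_solution_def mild_solution_def by blast
  then show thesis using that by blast
qed

lemma kinetic_solution_lower_bound:
  assumes "0 < t"
  obtains \<alpha> where "0 < \<alpha>"
    "\<And>f0 f A. prob_space f0 \<Longrightarrow> sets f0 = sets borel \<Longrightarrow>
      emeasure f0 (UNIV - ball 0 K \<times> ball 0 K) = 0 \<Longrightarrow> kinetic_solution \<Phi> f0 f \<Longrightarrow>
      A \<in> sets borel \<Longrightarrow> \<alpha> * measure lborel (A \<inter> cball 0 (1 / 2)) \<le> measure (f t) A"
proof -
  have "0 < t / 2" using assms by simp
  obtain R where "0 \<le> R" and confined: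
    "\<And>F s (z :: 'n state). ham_flow \<Phi> F \<Longrightarrow> z \<in> ball 0 K \<times> ball 0 K \<Longrightarrow> norm (fst (F s z)) \<le> R"
    using confinement by blast
  (* With tau0, tau1 <= t / 2, the relaxation times r in [t - tau1, t - tau1 / 2] used in the
     last step satisfy r >= tau0, so the marginal bound of the middle step applies to them. *)
  obtain \<tau>0 \<kappa>0 where \<tau>0: "0 < \<tau>0" "\<tau>0 \<le> t / 2" "0 < \<kappa>0" and fibre:
    "\<And>F \<tau> (y :: real^'n) S. ham_flow \<Phi> F \<Longrightarrow> \<tau> \<in> {\<tau>0 / 2..\<tau>0} \<Longrightarrow> norm y \<le> R \<Longrightarrow>
      S \<in> sets borel \<Longrightarrow> S \<subseteq> cball 0 1 \<Longrightarrow> \<kappa>0 * measure lborel S \<le> measure maxwellian {w. fst (F \<tau> (y, w)) \<in> S}"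
    using fibre_control[OF \<open>0 \<le> R\<close> \<open>0 < t / 2\<close>] by blast
  obtain \<tau>1 \<kappa>1 where \<tau>1: "0 < \<tau>1" "\<tau>1 \<le> t / 2" "0 < \<kappa>1" and spread:
    "\<And>F \<tau> (A :: 'n state set). ham_flow \<Phi> F \<Longrightarrow> \<tau> \<in> {0<..\<tau>1} \<Longrightarrow> A \<in> sets borel \<Longrightarrow>
      \<kappa>1 * measure lborel (A \<inter> cball 0 (1 / 2)) \<le> measure lborel (F \<tau> -` A \<inter> cball 0 1)"
    using state_spread[OF \<open>0 < t / 2\<close>] by blast
  define c where "c = exp (- \<tau>0) * (exp (- t) * \<kappa>0) * (\<tau>0 / 2)"
  define m where "m = (2 * pi) powr (- real CARD('n) / 2) * exp (- 1 / 2)"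
  have "0 < c" using \<tau>0 by (simp add: c_def)
  define \<alpha> where "\<alpha> = exp (- \<tau>1) * (c * m * \<kappa>1) * (\<tau>1 / 2)"
  show thesis
  proof (rule that)
    show "0 < \<alpha>"
      using \<tau>1 \<open>0 < c\<close> by (simp add: \<alpha>_def m_def)
    fix f0 f and A :: "'n state set"
    assume f0: "prob_space f0" "sets f0 = sets borel" "emeasure f0 (UNIV - ball 0 K \<times> ball 0 K) = 0"
      and "kinetic_solution \<Phi> f0 f" and A: "A \<in> sets borel"
    then obtain F where F: "ham_flow \<Phi> F" and "mild_solution F f0 f"
      using kinetic_solution_mild by blast
    interpret mild_solution F f0 f by fact
    have Z: "ball 0 K \<times> ball 0 K \<in> sets (borel :: 'n state measure)"
      by (intro borel_open open_Times open_ball)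
    have mass: "exp (- t) \<le> measure (marginal r) (cball 0 R)" if "r \<in> {0..t}" for r
    proof -
      have "exp (- r) \<le> measure (marginal r) (cball 0 R)"
        using marginal_mass_ge[OF f0(3) Z confined[OF F]] that by simp
      moreover have "exp (- t) \<le> exp (- r)" using that by simp
      ultimately show ?thesis by linarith
    qed
    have marginal: "c * measure lborel (B \<inter> cball 0 1) \<le> measure (marginal r) B"
      if r: "r \<in> {t - \<tau>1..t - \<tau>1 / 2}" and B: "B \<in> sets borel" for r B
    proof -
      have "exp (- \<tau>0) * (exp (- t) * \<kappa>0 * measure lborel (B \<inter> cball 0 1)) * (\<tau>0 / 2)
          \<le> measure (marginal r) B"
        by (rule marginal_ge_lebesgue[OF _ fibre[OF F]]) (use mass r \<tau>0 \<tau>1 B in auto)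
      then show ?thesis by (simp add: c_def algebra_simps)
    qed
    have "exp (- \<tau>1) * (c * m * \<kappa>1 * measure lborel (A \<inter> cball 0 (1 / 2))) * (\<tau>1 / 2) \<le> measure (f t) A"
      unfolding m_def by (rule solution_ge_lebesgue[OF marginal spread[OF F]]) (use \<tau>0 \<tau>1 A \<open>0 < c\<close> in auto)
    then show "\<alpha> * measure lborel (A \<inter> cball 0 (1 / 2)) \<le> measure (f t) A"
      by (simp add: \<alpha>_def algebra_simps)
  qed
qed

end

lemma potential_of_C2:
  fixes \<Phi> :: "real^'n \<Rightarrow> real"
  assumes "C2 \<Phi>" "\<forall>c. compact {x. \<Phi> x \<le> c}"
  obtains G where "potential \<Phi> G"
proof -
  obtain G H where "\<And>x. (\<Phi> has_derivative (\<lambda>h. G x \<bullet> h)) (at x)"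
    and G: "\<And>x. (G has_derivative blinfun_apply (H x)) (at x)"
    and H: "continuous_on UNIV (H :: real^'n \<Rightarrow> (real^'n) \<Rightarrow>\<^sub>L (real^'n))"
    using assms(1) unfolding C2_def by blast
  moreover have "\<exists>L. L-lipschitz_on (cball 0 r) G" for r
    by (rule lipschitz_on_of_continuous_derivative[OF G H compact_cball convex_cball])
  ultimately have "potential \<Phi> G"
    using assms(2) by (simp add: potential_def)
  then show thesis by (rule that)
qed

lemma measure_Times_ball_le_cball:
  fixes A :: "('a::euclidean_space \<times> 'b::euclidean_space) set"
  assumes "A \<in> sets borel"
  shows "measure lborel (A \<inter> ball 0 r \<times> ball 0 r) \<le> measure lborel (A \<inter> cball 0 (2 * r))"
proof (rule measure_lborel_mono_bounded)
  show "A \<inter> ball 0 r \<times> ball 0 r \<subseteq> A \<inter> cball 0 (2 * r)"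
  proof
    fix z assume z: "z \<in> A \<inter> ball 0 r \<times> ball 0 r"
    then have "norm (fst z) < r" "norm (snd z) < r"
      by (auto simp: mem_Times_iff)
    then have "norm z \<le> 2 * r"
      using norm_Pair_le[of "fst z" "snd z"] by simp
    with z show "z \<in> A \<inter> cball 0 (2 * r)" by simp
  qed
  show "A \<inter> ball 0 r \<times> ball 0 r \<in> sets borel"
    by (intro sets.Int assms borel_open open_Times open_ball)
  show "A \<inter> cball 0 (2 * r) \<in> sets borel"
    by (intro sets.Int assms cball_borel)
qed (intro bounded_Int disjI2 bounded_cball)

theorem mainTheorem10:
  fixes \<Phi> :: "real^'n \<Rightarrow> real" and t K :: real
  assumes "C2 \<Phi>"
    and "\<forall>c. compact {x. \<Phi> x \<le> c}"
    and "t > 0" and "K > 0"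
  shows "\<exists>\<alpha> \<delta>X \<delta>V. \<alpha> > 0 \<and> \<delta>X > 0 \<and> \<delta>V > 0 \<and>
    (\<forall>(f0 :: 'n state measure) f.
       prob_space f0 \<longrightarrow> sets f0 = sets borel \<longrightarrow>
       emeasure f0 (UNIV - (ball 0 K \<times> ball 0 K)) = 0 \<longrightarrow>
       kinetic_solution \<Phi> f0 f \<longrightarrow>
       (\<forall>A\<in>sets borel. measure (f t) A \<ge> \<alpha> * measure lborel (A \<inter> (ball 0 \<delta>X \<times> ball 0 \<delta>V))))"
proof -
  obtain G where "potential \<Phi> G"
    using potential_of_C2[OF assms(1,2)] by blast
  then interpret potential \<Phi> G .
  obtain \<alpha> where "0 < \<alpha>" and lower: "\<And>f0 f A. prob_space f0 \<Longrightarrow> sets f0 = sets borel \<Longrightarrow>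
      emeasure f0 (UNIV - ball 0 K \<times> ball 0 K) = 0 \<Longrightarrow> kinetic_solution \<Phi> f0 f \<Longrightarrow>
      A \<in> sets borel \<Longrightarrow> \<alpha> * measure lborel (A \<inter> cball 0 (1 / 2)) \<le> measure (f t) A"
    using kinetic_solution_lower_bound[OF \<open>t > 0\<close>] by blast
  show ?thesis
  proof (rule exI[of _ \<alpha>], rule exI[of _ "1 / 4"], rule exI[of _ "1 / 4"], intro conjI allI impI ballI)
    fix f0 f and A :: "'n state set"
    assume "prob_space f0" "sets f0 = sets borel" "emeasure f0 (UNIV - ball 0 K \<times> ball 0 K) = 0"
      "kinetic_solution \<Phi> f0 f" "A \<in> sets borel"
    moreover have "\<alpha> * measure lborel (A \<inter> ball 0 (1 / 4) \<times> ball 0 (1 / 4)) \<le>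
        \<alpha> * measure lborel (A \<inter> cball 0 (1 / 2))"
      using measure_Times_ball_le_cball[OF \<open>A \<in> sets borel\<close>, of "1 / 4"] \<open>0 < \<alpha>\<close> by simp
    ultimately show "\<alpha> * measure lborel (A \<inter> ball 0 (1 / 4) \<times> ball 0 (1 / 4)) \<le> measure (f t) A"
      using lower by (meson order_trans)
  qed (use \<open>0 < \<alpha>\<close> in auto)
qed

end
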